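(* Let $(P,Q):[\tau_0,\infty)\times S^1\to\mathbb{R}^2$ be a smooth solution of \[ P_{\tau\tau}-e^{-2\tau}P_{\theta\theta}-e^{2P}(Q_\tau^2-e^{-2\tau}Q_\theta^2)=0,\qquad Q_{\tau\tau}-e^{-2\tau}Q_{\theta\theta}+2(P_\tau Q_\tau-e^{-2\tau}P_\theta Q_\theta)=0, \] with $\tau_0\ge2$, such that for some $\gamma>0$ and all $\theta\in S^1$, $1\le P(\tau_0,\theta)\le\tau_0-1$ and $\gamma\le P(\tau_0,\theta)/\tau_0\le1-\gamma$, and $F(\tau_0)\le(\gamma-\alpha)^2$ for some $0<\alpha<\gamma$. Then $H_1$ is bounded on $[\tau_0,\infty)$.
   Context: $S^1=\mathbb{R}/2\pi\mathbb{Z}$. The function $F$ is \[ F(\tau)=\tfrac12\sup_{\theta\in S^1}\Big[(P_\tau-\tfrac1\tau P+e^{-\tau}P_\theta)^2+e^{2P}(Q_\tau+e^{-\tau}Q_\theta)^2\Big] +\tfrac12\sup_{\theta\in S^1}\Big[(P_\tau-\tfrac1\tau P-e^{-\tau}P_\theta)^2+e^{2P}(Q_\tau-e^{-\tau}Q_\theta)^2\Big]. \] For $k\ge0$ define the energies \[ \mathcal{E}_k=\tfrac12\int_{S^1}[(\partial_\theta^k\partial_\tau P)^2+e^{-2\tau}(\partial_\theta^{k+1}P)^2]d\theta,\quad E_k=\tfrac12\int_{S^1}e^{2P}[(\partial_\theta^k\partial_\tau Q)^2+e^{-2\tau}(\partial_\theta^{k+1}Q)^2]d\theta, \] \[ H_k=1+\mathcal{E}_k+E_k+\tfrac12e^{-\alpha\tau}\int_{S^1}(\partial_\theta^kP)^2d\theta,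 \] with $\alpha$ the constant in the hypotheses. *)

theory Defs
  imports "HOL-Analysis.Analysis"
begin

text \<open>A function u on [t0,oo) x R is smooth with derivative family D, where
  D i j = (d/dtau)^i (d/dtheta)^j u : every D i j is jointly continuous on
  [t0,oo) x R, the (one-sided at t0) tau-derivative of D i j is D (i+1) j and
  the theta-derivative of D i j is D i (j+1).\<close>
definition smooth_family ::
  "real \<Rightarrow> (real \<Rightarrow> real \<Rightarrow> real) \<Rightarrow> (nat \<Rightarrow> nat \<Rightarrow> real \<Rightarrow> real \<Rightarrow> real) \<Rightarrow> bool" where
  "smooth_family t0 u D \<longleftrightarrow>
     (\<forall>t \<theta>. t0 \<le> t \<longrightarrow> D 0 0 t \<theta> = u t \<theta>) \<and>
     (\<forall>i j. continuous_on ({t0..} \<times> UNIV) (\<lambda>(t, \<theta>). D i j t \<theta>)) \<and>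
     (\<forall>i j t \<theta>. t0 \<le> t \<longrightarrow>
        ((\<lambda>s. D i j s \<theta>) has_real_derivative D (Suc i) j t \<theta>) (at t within {t0..}) \<and>
        ((\<lambda>\<phi>. D i j t \<phi>) has_real_derivative D i (Suc j) t \<theta>) (at \<theta>))"

text \<open>Functions on [t0,oo) x S^1, S^1 = R/2piZ, as 2pi-periodic functions in theta.\<close>
definition periodic_in_theta :: "real \<Rightarrow> (real \<Rightarrow> real \<Rightarrow> real) \<Rightarrow> bool" where
  "periodic_in_theta t0 u \<longleftrightarrow> (\<forall>t \<theta>. t0 \<le> t \<longrightarrow> u t (\<theta> + 2 * pi) = u t \<theta>)"

definition Ffun :: "(nat \<Rightarrow> nat \<Rightarrow> real \<Rightarrow> real \<Rightarrow> real) \<Rightarrow> (nat \<Rightarrow> nat \<Rightarrow> real \<Rightarrow> real \<Rightarrow> real) \<Rightarrow> real \<Rightarrow> real" where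
  "Ffun DP DQ t =
     1/2 * (SUP \<theta>\<in>{0..2*pi}. (DP 1 0 t \<theta> - DP 0 0 t \<theta> / t + exp (- t) * DP 0 1 t \<theta>)\<^sup>2
              + exp (2 * DP 0 0 t \<theta>) * (DQ 1 0 t \<theta> + exp (- t) * DQ 0 1 t \<theta>)\<^sup>2)
   + 1/2 * (SUP \<theta>\<in>{0..2*pi}. (DP 1 0 t \<theta> - DP 0 0 t \<theta> / t - exp (- t) * DP 0 1 t \<theta>)\<^sup>2
              + exp (2 * DP 0 0 t \<theta>) * (DQ 1 0 t \<theta> - exp (- t) * DQ 0 1 t \<theta>)\<^sup>2)"

definition curlyE :: "(nat \<Rightarrow> nat \<Rightarrow> real \<Rightarrow> real \<Rightarrow> real) \<Rightarrow> nat \<Rightarrow> real \<Rightarrow> real" where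
  "curlyE DP k t = 1/2 * integral {0..2*pi}
      (\<lambda>\<theta>. (DP 1 k t \<theta>)\<^sup>2 + exp (- 2 * t) * (DP 0 (Suc k) t \<theta>)\<^sup>2)"

definition Eng :: "(nat \<Rightarrow> nat \<Rightarrow> real \<Rightarrow> real \<Rightarrow> real) \<Rightarrow> (nat \<Rightarrow> nat \<Rightarrow> real \<Rightarrow> real \<Rightarrow> real) \<Rightarrow> nat \<Rightarrow> real \<Rightarrow> real" where
  "Eng DP DQ k t = 1/2 * integral {0..2*pi}
      (\<lambda>\<theta>. exp (2 * DP 0 0 t \<theta>) * ((DQ 1 k t \<theta>)\<^sup>2 + exp (- 2 * t) * (DQ 0 (Suc k) t \<theta>)\<^sup>2))"

definition Hk :: "real \<Rightarrow> (nat \<Rightarrow> nat \<Rightarrow> real \<Rightarrow> real \<Rightarrow> real) \<Rightarrow> (nat \<Rightarrow> nat \<Rightarrow> real \<Rightarrow> real \<Rightarrow> real) \<Rightarrow> nat \<Rightarrow> real \<Rightarrow> real" where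
  "Hk \<alpha> DP DQ k t = 1 + curlyE DP k t + Eng DP DQ k t
      + 1/2 * exp (- \<alpha> * t) * integral {0..2*pi} (\<lambda>\<theta>. (DP 0 k t \<theta>)\<^sup>2)"

end

theory Submission
  imports Defs "HOL-Library.Real_Mod"
begin

text \<open>Along the characteristics \<theta> = c \<plusminus> e^-\<tau> the quantities
  A\<plusminus> = P_\<tau> \<plusminus> e^-\<tau> P_\<theta> - P/\<tau> and x\<plusminus> = e^P (Q_\<tau> \<plusminus> e^-\<tau> Q_\<theta>) obey transport equations
  in which each is damped and coupled only to its partner on the other family.
  A first-touching-time argument for sup (A+^2 + x+^2) + sup (A-^2 + x-^2) shows that
  this quantity decays like \<tau>^-2\<nu> with \<nu> < 1. The decay keeps P/\<tau> and P_\<tau> inside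
  [3\<alpha>/4, 1 - 3\<alpha>/4], in particular 1 \<le> P \<le> \<tau> - 1, which the barrier argument itself
  needs, so both are proved together. Once |A\<plusminus>| \<le> \<alpha>/4 the coupling coefficients of x\<plusminus>
  are at most 1 - \<alpha>, and a second barrier gives x+^2 + x-^2 = O(e^(-3\<alpha>\<tau>/4)). Finally,
  differentiating the first-order energy, integrating by parts in \<theta> and using the field
  equations gives H_1' \<le> K e^(-\<alpha>\<tau>/4) H_1, and Gronwall's inequality bounds H_1.\<close>

lemma nonneg_derivative_imp_le:
  fixes f f' :: "real \<Rightarrow> real"
  assumes deriv: "\<And>t. a \<le> t \<Longrightarrow> t \<le> b \<Longrightarrow> (f has_real_derivative f' t) (at t within {a..})"
    and nonneg: "\<And>t. a \<le> t \<Longrightarrow> t \<le> b \<Longrightarrow> f' t \<ge> 0" and ab: "a \<le> b"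
  shows "f a \<le> f b"
proof (rule DERIV_nonneg_imp_increasing_open[OF ab])
  fix x assume x: "a < x" "x < b"
  then have "at x within {a..} = at x" by (intro at_within_interior) auto
  then show "\<exists>y. DERIV f x :> y \<and> 0 \<le> y" using deriv[of x] nonneg[of x] x by auto
next
  show "continuous_on {a..b} f"
    unfolding continuous_on_eq_continuous_within
  proof
    fix x assume x: "x \<in> {a..b}"
    have "continuous (at x within {a..}) f" using deriv[of x] x by (auto intro: DERIV_continuous)
    then show "continuous (at x within {a..b}) f" by (rule continuous_within_subset) auto
  qed
qed

lemma derivative_nonneg_at_first_zero:
  fixes \<phi> :: "real \<Rightarrow> real"
  assumes T: "T < \<tau>1" and deriv: "(\<phi> has_real_derivative d) (at \<tau>1 within {T..})"
    and neg: "\<And>s. T \<le> s \<Longrightarrow> s < \<tau>1 \<Longrightarrow> \<phi> s < 0" and zero: "\<phi> \<tau>1 = 0"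
  shows "d \<ge> 0"
proof -
  have "(\<phi> has_real_derivative d) (at \<tau>1 within {T..\<tau>1})"
    by (rule has_field_derivative_subset[OF deriv]) auto
  then have "((\<lambda>y. (\<phi> y - \<phi> \<tau>1) / (y - \<tau>1)) \<longlongrightarrow> d) (at_left \<tau>1)"
    using T unfolding has_field_derivative_iff by (simp add: at_within_Icc_at_left)
  moreover have "eventually (\<lambda>y. 0 \<le> (\<phi> y - \<phi> \<tau>1) / (y - \<tau>1)) (at_left \<tau>1)"
  proof -
    have "eventually (\<lambda>y. y \<in> {T<..<\<tau>1}) (at_left \<tau>1)"
      using T eventually_at_left_real by blast
    then show ?thesis
      by eventually_elim (use neg zero in \<open>auto simp: zero_le_divide_iff less_imp_le\<close>)
  qed
  ultimately show ?thesis by (rule tendsto_lowerbound) simp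
qed

lemma nonpos_at_left_limit:
  fixes h :: "real \<Rightarrow> real"
  assumes cont: "continuous_on {T..} h" and T: "T < \<tau>1"
    and neg: "\<And>s. T \<le> s \<Longrightarrow> s < \<tau>1 \<Longrightarrow> h s < 0"
  shows "h \<tau>1 \<le> 0"
proof -
  have "(h \<longlongrightarrow> h \<tau>1) (at \<tau>1 within {T..})" using cont T by (simp add: continuous_on_def)
  then have "(h \<longlongrightarrow> h \<tau>1) (at \<tau>1 within {T..\<tau>1})" by (rule tendsto_within_subset) auto
  then have "(h \<longlongrightarrow> h \<tau>1) (at_left \<tau>1)" using T by (simp add: at_within_Icc_at_left)
  moreover have "eventually (\<lambda>s. s \<in> {T<..<\<tau>1}) (at_left \<tau>1)"
    using T eventually_at_left_real by blast
  then have "eventually (\<lambda>s. h s \<le> 0) (at_left \<tau>1)"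
    by (rule eventually_mono) (auto intro!: less_imp_le neg)
  ultimately show ?thesis by (rule tendsto_upperbound) simp
qed

lemma first_touching_time_exists:
  fixes Gp Gm :: "real \<Rightarrow> real \<Rightarrow> real" and B :: "real \<Rightarrow> real"
  assumes contp: "continuous_on ({T..} \<times> UNIV) (\<lambda>(t,\<theta>). Gp t \<theta>)"
    and contm: "continuous_on ({T..} \<times> UNIV) (\<lambda>(t,\<theta>). Gm t \<theta>)"
    and contB: "continuous_on {T..} B"
    and t: "T \<le> t" and \<theta>: "\<theta> \<in> {0..2*pi}" "\<theta>' \<in> {0..2*pi}" and touch: "B t \<le> Gp t \<theta> + Gm t \<theta>'"
  obtains \<tau>1 \<theta>1 \<theta>1' where "T \<le> \<tau>1" "B \<tau>1 \<le> Gp \<tau>1 \<theta>1 + Gm \<tau>1 \<theta>1'"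
    "\<And>s x y. T \<le> s \<Longrightarrow> s < \<tau>1 \<Longrightarrow> x \<in> {0..2*pi} \<Longrightarrow> y \<in> {0..2*pi} \<Longrightarrow> Gp s x + Gm s y < B s"
proof -
  define f where "f z = Gp (fst z) (fst (snd z)) + Gm (fst z) (snd (snd z)) - B (fst z)"
    for z :: "real \<times> real \<times> real"
  define S where "S = {T..t} \<times> ({0..2*pi} \<times> {0..2*pi::real})"
  define K where "K = S \<inter> f -` {0..}"
  have "continuous_on S (\<lambda>z. Gp (fst z) (fst (snd z)))"
    using continuous_on_compose2[OF contp _ _, of S "\<lambda>z. (fst z, fst (snd z))"]
    by (force simp: S_def intro!: continuous_intros)
  moreover have "continuous_on S (\<lambda>z. Gm (fst z) (snd (snd z)))"
    using continuous_on_compose2[OF contm _ _, of S "\<lambda>z. (fst z, snd (snd z))"]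
    by (force simp: S_def intro!: continuous_intros)
  moreover have "continuous_on S (\<lambda>z. B (fst z))"
    using continuous_on_compose2[OF contB continuous_on_fst[OF continuous_on_id], of S]
    by (auto simp: S_def)
  ultimately have "continuous_on S f" unfolding f_def by (intro continuous_intros)
  then have "closed K" unfolding K_def
    by (rule continuous_closed_preimage) (auto simp: S_def intro!: closed_Times)
  moreover have "compact S" unfolding S_def by (intro compact_Times compact_Icc)
  ultimately have "compact K" using compact_Int_closed[of S K] by (simp add: K_def Int_absorb1)
  then have "compact (fst ` K)" by (intro compact_continuous_image continuous_intros)
  moreover have "(t, \<theta>, \<theta>') \<in> K" using \<theta> touch t by (auto simp: K_def S_def f_def)
  ultimately obtain \<tau>1 where \<tau>1: "\<tau>1 \<in> fst ` K" "\<And>y. y \<in> fst ` K \<Longrightarrow> \<tau>1 \<le> y"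
    using compact_attains_inf[of "fst ` K"] by blast
  then obtain \<theta>1 \<theta>1' where K1: "(\<tau>1, \<theta>1, \<theta>1') \<in> K" by force
  show thesis
  proof (rule that)
    show "T \<le> \<tau>1" "B \<tau>1 \<le> Gp \<tau>1 \<theta>1 + Gm \<tau>1 \<theta>1'" using K1 by (auto simp: K_def S_def f_def)
    show "Gp s x + Gm s y < B s" if "T \<le> s" "s < \<tau>1" "x \<in> {0..2*pi}" "y \<in> {0..2*pi}" for s x y
    proof (rule ccontr)
      assume "\<not> Gp s x + Gm s y < B s"
      then have "(s, x, y) \<in> K" using that K1 by (auto simp: K_def S_def f_def)
      then show False using \<tau>1(2) that by force
    qed
  qed
qed

lemma first_touching_time:
  fixes Gp Gm :: "real \<Rightarrow> real \<Rightarrow> real" and B :: "real \<Rightarrow> real"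
  assumes contp: "continuous_on ({T..} \<times> UNIV) (\<lambda>(t,\<theta>). Gp t \<theta>)"
    and contm: "continuous_on ({T..} \<times> UNIV) (\<lambda>(t,\<theta>). Gm t \<theta>)"
    and contB: "continuous_on {T..} B"
    and periodp: "\<And>t \<theta>. T \<le> t \<Longrightarrow> \<exists>\<theta>0\<in>{0..2*pi}. Gp t \<theta> = Gp t \<theta>0"
    and periodm: "\<And>t \<theta>. T \<le> t \<Longrightarrow> \<exists>\<theta>0\<in>{0..2*pi}. Gm t \<theta> = Gm t \<theta>0"
    and init: "\<And>\<theta> \<theta>'. Gp T \<theta> + Gm T \<theta>' < B T"
    and no_touch: "\<And>\<tau>1 \<theta>1 \<theta>1'. T < \<tau>1 \<Longrightarrow>
        (\<And>s \<theta> \<theta>'. T \<le> s \<Longrightarrow> s < \<tau>1 \<Longrightarrow> Gp s \<theta> + Gm s \<theta>' < B s) \<Longrightarrow>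
        (\<And>\<theta> \<theta>'. Gp \<tau>1 \<theta> + Gm \<tau>1 \<theta>' \<le> B \<tau>1) \<Longrightarrow>
        Gp \<tau>1 \<theta>1 + Gm \<tau>1 \<theta>1' = B \<tau>1 \<Longrightarrow> False"
    and t: "T \<le> t"
  shows "Gp t \<theta> + Gm t \<theta>' < B t"
proof (rule ccontr)
  assume "\<not> Gp t \<theta> + Gm t \<theta>' < B t"
  moreover obtain a b where ab: "a \<in> {0..2*pi}" "b \<in> {0..2*pi}" "Gp t \<theta> = Gp t a" "Gm t \<theta>' = Gm t b"
    using periodp[OF t] periodm[OF t] by metis
  ultimately have "B t \<le> Gp t a + Gm t b" by simp
  with first_touching_time_exists[OF contp contm contB t ab(1,2)]
  obtain \<tau>1 \<theta>1 \<theta>1' where \<tau>1: "T \<le> \<tau>1" and ge: "B \<tau>1 \<le> Gp \<tau>1 \<theta>1 + Gm \<tau>1 \<theta>1'"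
    and below: "\<And>s x y. T \<le> s \<Longrightarrow> s < \<tau>1 \<Longrightarrow> x \<in> {0..2*pi} \<Longrightarrow> y \<in> {0..2*pi} \<Longrightarrow> Gp s x + Gm s y < B s"
    by blast
  have Tl: "T < \<tau>1" using ge init[of \<theta>1 \<theta>1'] \<tau>1 by (cases "T = \<tau>1") auto
  have strict: "Gp s x + Gm s y < B s" if s: "T \<le> s" "s < \<tau>1" for s x y
  proof -
    obtain x' y' where "x' \<in> {0..2*pi}" "y' \<in> {0..2*pi}" "Gp s x = Gp s x'" "Gm s y = Gm s y'"
      using periodp[OF s(1)] periodm[OF s(1)] by metis
    then show ?thesis using below[OF s] by simp
  qed
  have le: "Gp \<tau>1 x + Gm \<tau>1 y \<le> B \<tau>1" for x y
  proof -
    have "continuous_on {T..} (\<lambda>s. Gp s x)"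
      using continuous_on_compose2[OF contp _ _, of "{T..}" "\<lambda>s. (s, x)"] by (force intro!: continuous_intros)
    moreover have "continuous_on {T..} (\<lambda>s. Gm s y)"
      using continuous_on_compose2[OF contm _ _, of "{T..}" "\<lambda>s. (s, y)"] by (force intro!: continuous_intros)
    ultimately have "continuous_on {T..} (\<lambda>s. Gp s x + Gm s y - B s)" by (intro continuous_intros contB)
    from nonpos_at_left_limit[OF this Tl] show ?thesis using strict by force
  qed
  from le[of \<theta>1 \<theta>1'] ge have "Gp \<tau>1 \<theta>1 + Gm \<tau>1 \<theta>1' = B \<tau>1" by linarith
  then show False using no_touch[OF Tl strict le] by blast
qed

text \<open>At a first touching time the sum, followed along the characteristics \<theta> = c \<plusminus> e^-s
  through the two touching points, cannot grow slower than the barrier; so a strict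
  inequality between the derivatives there rules out touching.\<close>

lemma characteristic_barrier:
  fixes Gp Gm :: "real \<Rightarrow> real \<Rightarrow> real" and B :: "real \<Rightarrow> real"
  assumes contp: "continuous_on ({T..} \<times> UNIV) (\<lambda>(t,\<theta>). Gp t \<theta>)"
    and contm: "continuous_on ({T..} \<times> UNIV) (\<lambda>(t,\<theta>). Gm t \<theta>)"
    and contB: "continuous_on {T..} B"
    and periodp: "\<And>t \<theta>. T \<le> t \<Longrightarrow> \<exists>\<theta>0\<in>{0..2*pi}. Gp t \<theta> = Gp t \<theta>0"
    and periodm: "\<And>t \<theta>. T \<le> t \<Longrightarrow> \<exists>\<theta>0\<in>{0..2*pi}. Gm t \<theta> = Gm t \<theta>0"
    and init: "\<And>\<theta> \<theta>'. Gp T \<theta> + Gm T \<theta>' < B T"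
    and touching: "\<And>\<tau>1 \<theta>1 \<theta>1'. T < \<tau>1 \<Longrightarrow>
        (\<And>s \<theta> \<theta>'. T \<le> s \<Longrightarrow> s \<le> \<tau>1 \<Longrightarrow> Gp s \<theta> + Gm s \<theta>' \<le> B s) \<Longrightarrow>
        Gp \<tau>1 \<theta>1 + Gm \<tau>1 \<theta>1' = B \<tau>1 \<Longrightarrow>
        \<exists>g1 g2 b. ((\<lambda>s. Gp s (\<theta>1 - exp (- \<tau>1) + exp (- s))) has_real_derivative g1) (at \<tau>1 within {T..})
          \<and> ((\<lambda>s. Gm s (\<theta>1' + exp (- \<tau>1) - exp (- s))) has_real_derivative g2) (at \<tau>1 within {T..})
          \<and> (B has_real_derivative b) (at \<tau>1 within {T..}) \<and> g1 + g2 < b"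
    and t: "T \<le> t"
  shows "Gp t \<theta> + Gm t \<theta>' < B t"
proof (rule first_touching_time[OF contp contm contB periodp periodm init _ t])
  fix \<tau>1 \<theta>1 \<theta>1'
  assume T: "T < \<tau>1" and below: "\<And>s \<theta> \<theta>'. T \<le> s \<Longrightarrow> s < \<tau>1 \<Longrightarrow> Gp s \<theta> + Gm s \<theta>' < B s"
    and le: "\<And>\<theta> \<theta>'. Gp \<tau>1 \<theta> + Gm \<tau>1 \<theta>' \<le> B \<tau>1" and touch: "Gp \<tau>1 \<theta>1 + Gm \<tau>1 \<theta>1' = B \<tau>1"
  have "Gp s \<theta> + Gm s \<theta>' \<le> B s" if "T \<le> s" "s \<le> \<tau>1" for s \<theta> \<theta>'
    using below[of s \<theta> \<theta>'] le[of \<theta> \<theta>'] that by (cases "s = \<tau>1") auto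
  then obtain g1 g2 b
    where d1: "((\<lambda>s. Gp s (\<theta>1 - exp (- \<tau>1) + exp (- s))) has_real_derivative g1) (at \<tau>1 within {T..})"
      and d2: "((\<lambda>s. Gm s (\<theta>1' + exp (- \<tau>1) - exp (- s))) has_real_derivative g2) (at \<tau>1 within {T..})"
      and dB: "(B has_real_derivative b) (at \<tau>1 within {T..})" and less: "g1 + g2 < b"
    using touching[OF T _ touch] by blast
  define \<phi> where "\<phi> s = Gp s (\<theta>1 - exp (- \<tau>1) + exp (- s)) + Gm s (\<theta>1' + exp (- \<tau>1) - exp (- s)) - B s" for s
  have "(\<phi> has_real_derivative g1 + g2 - b) (at \<tau>1 within {T..})"
    unfolding \<phi>_def by (intro DERIV_diff DERIV_add d1 d2 dB)
  then have "0 \<le> g1 + g2 - b"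
    by (rule derivative_nonneg_at_first_zero[OF T]) (use below touch in \<open>auto simp: \<phi>_def\<close>)
  with less show False by simp
qed

lemma has_real_derivative_along_characteristic:
  fixes f ft f\<theta> :: "real \<Rightarrow> real \<Rightarrow> real"
  assumes dt: "\<And>t \<theta>. T \<le> t \<Longrightarrow> ((\<lambda>s. f s \<theta>) has_real_derivative ft t \<theta>) (at t within {T..})"
    and d\<theta>: "\<And>t \<theta>. T \<le> t \<Longrightarrow> ((\<lambda>\<phi>. f t \<phi>) has_real_derivative f\<theta> t \<theta>) (at \<theta>)"
    and cont: "continuous_on ({T..} \<times> UNIV) (\<lambda>(t,\<theta>). f\<theta> t \<theta>)"
    and s: "T \<le> s"
  shows "((\<lambda>s. f s (c + \<sigma> * exp (- s))) has_real_derivative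
           (ft s (c + \<sigma> * exp (- s)) - \<sigma> * exp (- s) * f\<theta> s (c + \<sigma> * exp (- s)))) (at s within {T..})"
proof -
  define g where "g s = (s, c + \<sigma> * exp (- s))" for s :: real
  define Df where "Df z = (\<lambda>(dt, d\<theta>). ft (fst z) (snd z) * dt + blinfun_mult_right (f\<theta> (fst z) (snd z)) d\<theta>)"
    for z :: "real \<times> real"
  have partials: "((\<lambda>(x, y). f x y) has_derivative Df (x, y)) (at (x, y) within {T..} \<times> UNIV)"
    if x: "x \<in> {T..}" for x y
    unfolding Df_def fst_conv snd_conv
  proof (rule has_derivative_partialsI)
    show "((\<lambda>x. f x y) has_derivative (*) (ft x y)) (at x within {T..})"
      using dt[of x y] x by (simp add: has_field_derivative_def)
    show "((\<lambda>y. f x y) has_derivative blinfun_mult_right (f\<theta> x y)) (at y within UNIV)"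
      if "x \<in> {T..}" for x y
      using d\<theta>[of x y] that by (simp add: has_field_derivative_def)
    have "continuous_on ({T..} \<times> UNIV) (\<lambda>(x, y). blinfun_mult_right (f\<theta> x y))"
      using cont by (auto simp: split_beta intro!: continuous_intros)
    then show "continuous (at (x, y) within {T..} \<times> UNIV) (\<lambda>(x, y). blinfun_mult_right (f\<theta> x y))"
      using x by (simp add: continuous_on_eq_continuous_within)
  qed auto
  have g: "(g has_derivative (\<lambda>h. (h, - \<sigma> * exp (- s) * h))) (at s within {T..})"
    unfolding g_def by (auto intro!: derivative_eq_intros simp: algebra_simps)
  have "((\<lambda>x. (\<lambda>(x, y). f x y) (g x)) has_derivative (\<lambda>h. Df (g s) (h, - \<sigma> * exp (- s) * h)))
      (at s within {T..})"
    by (rule has_derivative_in_compose2[of "{T..} \<times> UNIV" _ Df, OF _ _ _ g])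
       (use partials s in \<open>auto simp: g_def\<close>)
  then have "((\<lambda>s. f s (c + \<sigma> * exp (- s))) has_derivative (\<lambda>h. Df (g s) (h, - \<sigma> * exp (- s) * h)))
      (at s within {T..})"
    by (simp add: g_def)
  then show ?thesis
    unfolding has_field_derivative_def
    by (rule has_derivative_eq_rhs) (auto simp: g_def Df_def algebra_simps fun_eq_iff)
qed

lemma integral_derivative_of_periodic:
  fixes f f' :: "real \<Rightarrow> real"
  assumes deriv: "\<And>x. (f has_real_derivative f' x) (at x)" and periodic: "f (2*pi) = f 0"
  shows "integral {0..2*pi} f' = 0"
proof -
  have "(f' has_integral (f (2*pi) - f 0)) {0..2*pi}"
    using deriv
    by (intro fundamental_theorem_of_calculus)
       (auto simp: has_real_derivative_iff_has_vector_derivative intro: has_vector_derivative_at_within)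
  then show ?thesis using periodic by (simp add: integral_unique)
qed

lemma derivative_of_vanishing_eq_0:
  fixes f :: "real \<Rightarrow> real"
  assumes "\<And>x. f x = 0" and "(f has_real_derivative D) (at x)"
  shows "D = 0"
proof -
  have "f = (\<lambda>_. 0)" using assms(1) by auto
  then show ?thesis using assms(2) DERIV_const DERIV_unique by metis
qed

text \<open>The proof shows that H t * exp (K / \<rho> * exp (- \<rho> * t)) is nonincreasing.\<close>

lemma gronwall_exp_decaying_rate:
  fixes H H' :: "real \<Rightarrow> real"
  assumes deriv: "\<And>t. T \<le> t \<Longrightarrow> (H has_real_derivative H' t) (at t within {T..})"
    and growth: "\<And>t. T \<le> t \<Longrightarrow> H' t \<le> K * exp (- \<rho> * t) * H t"
    and nonneg: "\<And>t. T \<le> t \<Longrightarrow> 0 \<le> H t"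
    and \<rho>: "0 < \<rho>" and K: "0 \<le> K" and t: "T \<le> t"
  shows "H t \<le> H T * exp (K / \<rho> * exp (- \<rho> * T))"
proof -
  define E where "E t = exp (K / \<rho> * exp (- \<rho> * t))" for t
  have "- (H T * E T) \<le> - (H t * E t)"
  proof (rule nonneg_derivative_imp_le[OF _ _ t])
    fix u assume u: "T \<le> u"
    show "((\<lambda>t. - (H t * E t)) has_real_derivative - (E u * (H' u - K * exp (- \<rho> * u) * H u)))
        (at u within {T..})"
      unfolding E_def using \<rho>
      by (auto intro!: derivative_eq_intros deriv[OF u] simp: field_simps)
    show "0 \<le> - (E u * (H' u - K * exp (- \<rho> * u) * H u))"
      using growth[OF u] by (simp add: E_def mult_nonneg_nonpos)
  qed
  moreover have "H t \<le> H t * E t"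
    using nonneg[OF t] \<rho> K by (simp add: E_def mult_le_cancel_left1)
  ultimately show ?thesis by (simp add: E_def)
qed

lemma exp_double: "exp (2 * x) = (exp x)\<^sup>2" "exp (- 2 * x) = (exp (- x))\<^sup>2" for x :: real
  by (simp_all add: power2_eq_square flip: exp_add)

lemma le_SUP_continuous_on_Icc:
  fixes f :: "real \<Rightarrow> real"
  assumes "continuous_on {a..b} f" "x \<in> {a..b}"
  shows "f x \<le> (SUP y\<in>{a..b}. f y)"
  using assms by (intro cSUP_upper bounded_imp_bdd_above compact_imp_bounded compact_continuous_image) auto

lemma abs_one_minus_two_div_le:
  fixes p \<tau> :: real
  assumes "1 \<le> p" "p \<le> \<tau> - 1"
  shows "\<bar>1 - 2 * p / \<tau>\<bar> \<le> 1 - 2 / \<tau>"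
proof -
  have \<tau>: "\<tau> > 0" using assms by auto
  have "2 / \<tau> \<le> 2 * p / \<tau>" "2 * p / \<tau> \<le> 2 * (\<tau> - 1) / \<tau>"
    using assms \<tau> by (simp_all add: divide_right_mono)
  moreover have "2 * (\<tau> - 1) / \<tau> = 2 - 2 / \<tau>" using \<tau> by (simp add: field_simps)
  ultimately show ?thesis by (simp add: abs_le_iff)
qed

lemma abs_mult_le_sum_squares: "2 * \<bar>x\<bar> * \<bar>y\<bar> \<le> x\<^sup>2 + (y::real)\<^sup>2"
  using sum_squares_bound[of "\<bar>x\<bar>" "\<bar>y\<bar>"] by simp

lemma mult_le_sum_squares_weighted:
  fixes a b h :: real
  assumes "0 < h"
  shows "2 * \<bar>a\<bar> * \<bar>b\<bar> \<le> (a\<^sup>2 + h\<^sup>2 * b\<^sup>2) / h"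
proof -
  have "2 * \<bar>a\<bar> * \<bar>h * b\<bar> \<le> a\<^sup>2 + (h * b)\<^sup>2" by (rule abs_mult_le_sum_squares)
  then show ?thesis
    using assms by (simp add: le_divide_eq abs_mult power_mult_distrib algebra_simps)
qed

lemma mult3_le_sum_squares:
  fixes x y z U :: real
  assumes "\<bar>x\<bar> \<le> U"
  shows "2 * x * y * z \<le> U * (y\<^sup>2 + z\<^sup>2)"
proof -
  have "2 * x * y * z \<le> \<bar>x\<bar> * (2 * \<bar>y\<bar> * \<bar>z\<bar>)" by (simp add: abs_mult[symmetric] mult.assoc)
  also have "\<dots> \<le> U * (y\<^sup>2 + z\<^sup>2)"
    using assms by (intro mult_mono abs_mult_le_sum_squares) auto
  finally show ?thesis .
qed

lemma coupled_products_le: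
  fixes l c A B x y :: real
  assumes "\<bar>c\<bar> \<le> l"
  shows "l * A * B + c * x * y \<le> l * ((A\<^sup>2 + x\<^sup>2) + (B\<^sup>2 + y\<^sup>2)) / 2"
proof -
  have "l * (2 * A * B) \<le> l * (A\<^sup>2 + B\<^sup>2)"
    using assms by (intro mult_left_mono sum_squares_bound) auto
  moreover have "2 * c * x * y \<le> l * (x\<^sup>2 + y\<^sup>2)" by (rule mult3_le_sum_squares[OF assms])
  ultimately show ?thesis by (simp add: algebra_simps)
qed

text \<open>In the next two lemmas Ptx stands for \<partial>\<tau> \<partial>\<theta> P etc., E = e^P, e = e^-\<tau>,
  h = e^(-\<alpha>\<tau>/2) and xx for the product x+ x-; the hypotheses of the identity are the
  \<theta>-derivatives of the field equations.\<close>

lemma energy_derivative_identity: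
  fixes Pt Px Ptx Pxx Ptxx Pxxx Pttx Qt Qx Qtx Qxx Qtxx Qxxx Qttx E e h al :: real
  assumes Pttx: "Pttx = e\<^sup>2*Pxxx + 2*Px*E\<^sup>2*(Qt\<^sup>2 - e\<^sup>2*Qx\<^sup>2) + E\<^sup>2*(2*Qt*Qtx - 2*e\<^sup>2*Qx*Qxx)"
    and Qttx: "Qttx = e\<^sup>2*Qxxx - 2*(Ptx*Qt + Pt*Qtx - e\<^sup>2*Pxx*Qx - e\<^sup>2*Px*Qxx)"
  shows "(Ptx*Pttx - e\<^sup>2*Pxx\<^sup>2 + e\<^sup>2*Pxx*Ptxx + E\<^sup>2*Pt*(Qtx\<^sup>2 + e\<^sup>2*Qxx\<^sup>2)
          + E\<^sup>2*(Qtx*Qttx - e\<^sup>2*Qxx\<^sup>2 + e\<^sup>2*Qxx*Qtxx) - al/2*h\<^sup>2*Px\<^sup>2 + h\<^sup>2*Px*Ptx)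
        - e\<^sup>2*(Pxxx*Ptx + Pxx*Ptxx) - e\<^sup>2*(2*Px*E\<^sup>2*Qxx*Qtx + E\<^sup>2*Qxxx*Qtx + E\<^sup>2*Qxx*Qtxx)
       = 2*Ptx*Px*(E*(Qt + e*Qx) * (E*(Qt - e*Qx))) - 2*E\<^sup>2*e\<^sup>2*Ptx*Qx*Qxx + 2*E\<^sup>2*e\<^sup>2*Qtx*Pxx*Qx
          - e\<^sup>2*Pxx\<^sup>2 - Pt*E\<^sup>2*Qtx\<^sup>2 + (Pt-1)*E\<^sup>2*e\<^sup>2*Qxx\<^sup>2 - al/2*h\<^sup>2*Px\<^sup>2 + h\<^sup>2*Px*Ptx"
  unfolding Pttx Qttx by (simp add: power2_eq_square algebra_simps)

lemma energy_derivative_bound: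
  fixes Pt Px Ptx Pxx Qx Qtx Qxx E e h al X U xx :: real
  assumes Pt: "0 \<le> Pt" "Pt \<le> 1" and h: "0 < h" and al: "0 \<le> al"
    and xx: "\<bar>xx\<bar> \<le> X" and U: "\<bar>E * e * Qx\<bar> \<le> U"
  defines "J \<equiv> 1/2 * (Ptx\<^sup>2 + e\<^sup>2*Pxx\<^sup>2 + E\<^sup>2*(Qtx\<^sup>2 + e\<^sup>2*Qxx\<^sup>2) + h\<^sup>2*Px\<^sup>2)"
  shows "2*Ptx*Px*xx - 2*E\<^sup>2*e\<^sup>2*Ptx*Qx*Qxx + 2*E\<^sup>2*e\<^sup>2*Qtx*Pxx*Qx - e\<^sup>2*Pxx\<^sup>2 - Pt*E\<^sup>2*Qtx\<^sup>2
          + (Pt-1)*E\<^sup>2*e\<^sup>2*Qxx\<^sup>2 - al/2*h\<^sup>2*Px\<^sup>2 + h\<^sup>2*Px*Ptx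
        \<le> (2*X/h + 4*U + h) * J"
proof -
  have X: "0 \<le> X" using xx by linarith
  have U0: "0 \<le> U" using U by linarith
  have J1: "Ptx\<^sup>2 + (h*Px)\<^sup>2 \<le> 2 * J"
    and J2: "Ptx\<^sup>2 + (E*e*Qxx)\<^sup>2 \<le> 2 * J"
    and J3: "(E*Qtx)\<^sup>2 + (e*Pxx)\<^sup>2 \<le> 2 * J"
    by (simp_all add: J_def power_mult_distrib algebra_simps)
  have "2*Ptx*Px*xx \<le> \<bar>xx\<bar> * (2 * \<bar>Ptx\<bar> * \<bar>Px\<bar>)"
    by (simp add: abs_mult[symmetric] mult.commute mult.left_commute)
  also have "\<dots> \<le> X * ((Ptx\<^sup>2 + h\<^sup>2 * Px\<^sup>2) / h)"
    using X xx by (intro mult_mono mult_le_sum_squares_weighted h) auto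
  also have "\<dots> \<le> X/h * (2 * J)"
    using J1 X h by (simp add: power_mult_distrib divide_right_mono mult_left_mono)
  finally have 1: "2*Ptx*Px*xx \<le> X/h * (2 * J)" .
  have "- 2*E\<^sup>2*e\<^sup>2*Ptx*Qx*Qxx = 2 * (- (E*e*Qx)) * Ptx * (E*e*Qxx)"
    by (simp add: power2_eq_square algebra_simps)
  also have "\<dots> \<le> U * (2 * J)"
    using U J2 U0 by (intro order.trans[OF mult3_le_sum_squares mult_left_mono]) auto
  finally have 2: "- 2*E\<^sup>2*e\<^sup>2*Ptx*Qx*Qxx \<le> U * (2 * J)" .
  have "2*E\<^sup>2*e\<^sup>2*Qtx*Pxx*Qx = 2 * (E*e*Qx) * (E*Qtx) * (e*Pxx)"
    by (simp add: power2_eq_square algebra_simps)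
  also have "\<dots> \<le> U * (2 * J)"
    using U J3 U0 by (intro order.trans[OF mult3_le_sum_squares mult_left_mono]) auto
  finally have 3: "2*E\<^sup>2*e\<^sup>2*Qtx*Pxx*Qx \<le> U * (2 * J)" .
  have "h * (2 * (h*Px) * Ptx) \<le> h * (2 * J)"
    using sum_squares_bound[of "h*Px" Ptx] J1 h by (intro mult_left_mono) auto
  then have 4: "h\<^sup>2*Px*Ptx \<le> h * J" by (simp add: power2_eq_square algebra_simps)
  have "- e\<^sup>2*Pxx\<^sup>2 \<le> 0" "- Pt*E\<^sup>2*Qtx\<^sup>2 \<le> 0" "(Pt-1)*E\<^sup>2*e\<^sup>2*Qxx\<^sup>2 \<le> 0" "- al/2*h\<^sup>2*Px\<^sup>2 \<le> 0"
    using Pt al by (simp_all add: mult_nonpos_nonneg)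
  moreover have "(2*X/h + 4*U + h) * J = X/h * (2 * J) + U * (2 * J) + U * (2 * J) + h * J"
    by (simp add: algebra_simps)
  ultimately show ?thesis using 1 2 3 4 by linarith
qed

text \<open>Here \<sigma> = \<plusminus>1 selects the family of characteristics \<theta> = c + \<sigma> e^-\<tau>; pA, pB, pC
  stand for P, P_\<tau>, P_\<theta> and pD, pE, pF for P_\<tau>\<theta>, P_\<theta>\<theta>, P_\<tau>\<tau> (similarly for Q),
  E = e^P, e = e^-\<tau>, and dP00 etc. are the derivatives along the characteristic. The
  hypotheses are the field equations.\<close>

lemma characteristic_identity:
  fixes pA pB pC pD pE pF qB qC qD qE qF e E s \<sigma> :: real
  assumes pF: "pF = e\<^sup>2 * pE + E\<^sup>2 * (qB\<^sup>2 - e\<^sup>2 * qC\<^sup>2)"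
    and qF: "qF = e\<^sup>2 * qE - 2 * (pB * qB - e\<^sup>2 * pC * qC)"
    and s: "s \<noteq> 0" and \<sigma>: "\<sigma>\<^sup>2 = 1"
  defines "dP00 \<equiv> pB - \<sigma> * e * pC" and "dP10 \<equiv> pF - \<sigma> * e * pD"
    and "dP01 \<equiv> pD - \<sigma> * e * pE" and "dQ10 \<equiv> qF - \<sigma> * e * qD" and "dQ01 \<equiv> qD - \<sigma> * e * qE"
  defines "A \<equiv> pB + \<sigma> * e * pC - pA / s" and "A' \<equiv> pB - \<sigma> * e * pC - pA / s"
    and "x \<equiv> E * (qB + \<sigma> * e * qC)" and "x' \<equiv> E * (qB - \<sigma> * e * qC)"
  shows "2 * x * (E * dP00 * (qB + \<sigma> * e * qC) + E * (dQ10 - \<sigma> * e * qC + \<sigma> * e * dQ01))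
       = - x\<^sup>2 + (1 - 2 * (pB + \<sigma> * e * pC)) * x * x'"
    and "2 * A * (dP10 + (- \<sigma> * e * pC + \<sigma> * e * dP01) - (dP00 / s - pA / s\<^sup>2))
       + 2 * x * (E * dP00 * (qB + \<sigma> * e * qC) + E * (dQ10 - \<sigma> * e * qC + \<sigma> * e * dQ01))
       = - (A\<^sup>2 + x\<^sup>2) + (1 - 2 / s) * A * A' + (1 - 2 * pA / s) * x * x'"
  unfolding dP00_def dP10_def dP01_def dQ10_def dQ01_def A_def A'_def x_def x'_def pF qF
  using s \<sigma> by (simp_all add: field_simps power2_eq_square) algebra+

lemma smooth_family_base: "smooth_family T u D \<Longrightarrow> T \<le> t \<Longrightarrow> D 0 0 t \<theta> = u t \<theta>"
  by (simp add: smooth_family_def)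

lemma smooth_family_continuous:
  "smooth_family T u D \<Longrightarrow> continuous_on ({T..} \<times> UNIV) (\<lambda>(t, \<theta>). D i j t \<theta>)"
  by (simp add: smooth_family_def)

lemma smooth_family_deriv_t: "smooth_family T u D \<Longrightarrow> T \<le> t \<Longrightarrow>
   ((\<lambda>s. D i j s \<theta>) has_real_derivative D (Suc i) j t \<theta>) (at t within {T..})"
  by (simp add: smooth_family_def)

lemma smooth_family_deriv_theta: "smooth_family T u D \<Longrightarrow> T \<le> t \<Longrightarrow>
   ((\<lambda>\<phi>. D i j t \<phi>) has_real_derivative D i (Suc j) t \<theta>) (at \<theta>)"
  by (simp add: smooth_family_def)

lemma smooth_family_continuous_theta:
  "smooth_family T u D \<Longrightarrow> T \<le> t \<Longrightarrow> continuous_on S (\<lambda>\<theta>. D i j t \<theta>)"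
  by (rule continuous_at_imp_continuous_on) (metis DERIV_isCont smooth_family_deriv_theta)

lemma smooth_family_along_characteristic: "smooth_family T u D \<Longrightarrow> T \<le> s \<Longrightarrow>
  ((\<lambda>s. D i j s (c + \<sigma> * exp (- s))) has_real_derivative
     (D (Suc i) j s (c + \<sigma> * exp (- s)) - \<sigma> * exp (- s) * D i (Suc j) s (c + \<sigma> * exp (- s))))
   (at s within {T..})"
  by (rule has_real_derivative_along_characteristic[where ft="D (Suc i) j" and f\<theta>="D i (Suc j)"])
     (auto intro: smooth_family_deriv_t smooth_family_deriv_theta smooth_family_continuous)

lemma at_within_atLeast_neq_bot: "T \<le> (t::real) \<Longrightarrow> at t within {T..} \<noteq> bot"
  using at_le[of "{t<..}" "{T..}" t] by (metis bot.extremum_uniqueI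
      trivial_limit_at_right_real atLeast_iff greaterThan_iff less_imp_le order_trans subsetI)

lemma smooth_family_periodic:
  assumes sf: "smooth_family T u D" and per: "periodic_in_theta T u" and t: "T \<le> t"
  shows "D i j t (\<theta> + 2*pi) = D i j t \<theta>"
  using t
proof (induction j arbitrary: t \<theta>)
  case 0
  then show ?case
  proof (induction i arbitrary: t \<theta>)
    case 0
    then show ?case using smooth_family_base[OF sf] per by (simp add: periodic_in_theta_def)
  next
    case (Suc i)
    have "((\<lambda>s. D i 0 s (\<theta> + 2*pi)) has_real_derivative D (Suc i) 0 t (\<theta> + 2*pi)) (at t within {T..})"
      using smooth_family_deriv_t[OF sf Suc.prems] .
    moreover have "((\<lambda>s. D i 0 s (\<theta> + 2*pi)) has_real_derivative D (Suc i) 0 t \<theta>) (at t within {T..})"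
      by (rule has_field_derivative_transform_within[OF smooth_family_deriv_t[OF sf Suc.prems], of 1])
         (use Suc in auto)
    ultimately show ?case
      using has_field_derivative_unique at_within_atLeast_neq_bot[OF Suc.prems] by blast
  qed
next
  case (Suc j)
  have "((\<lambda>\<phi>. D i j t (\<phi> + 2*pi)) has_real_derivative D i (Suc j) t (\<theta> + 2*pi)) (at \<theta>)"
    using smooth_family_deriv_theta[OF sf Suc.prems, of i j "\<theta> + 2*pi"] DERIV_shift by blast
  moreover have "((\<lambda>\<phi>. D i j t (\<phi> + 2*pi)) has_real_derivative D i (Suc j) t \<theta>) (at \<theta>)"
    using smooth_family_deriv_theta[OF sf Suc.prems, of i j \<theta>] Suc.IH[OF Suc.prems] by simp
  ultimately show ?case by (rule DERIV_unique)
qed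

lemma smooth_family_periodic_int:
  assumes sf: "smooth_family T u D" and per: "periodic_in_theta T u" and t: "T \<le> t"
  shows "D i j t (\<theta> + 2*pi * of_int k) = D i j t \<theta>"
proof -
  have nat: "D i j t (\<theta> + 2*pi * of_nat n) = D i j t \<theta>" for \<theta> n
  proof (induction n)
    case (Suc n)
    have "D i j t (\<theta> + 2*pi * of_nat (Suc n)) = D i j t ((\<theta> + 2*pi * of_nat n) + 2*pi)"
      by (simp add: algebra_simps)
    then show ?case using smooth_family_periodic[OF sf per t] Suc by simp
  qed simp
  show ?thesis
  proof (cases "0 \<le> k")
    case True
    then show ?thesis using nat[of \<theta> "nat k"] by simp
  next
    case False
    then show ?thesis using nat[of "\<theta> + 2*pi * of_int k" "nat (- k)"] by simp
  qed
qed

lemma rmod_2pi_mem: "\<theta> rmod (2*pi) \<in> {0..2*pi}"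
  by (simp add: rmod_nonneg rmod_le)

lemma smooth_family_rmod:
  assumes sf: "smooth_family T u D" and per: "periodic_in_theta T u" and t: "T \<le> t"
  shows "D i j t (\<theta> rmod (2*pi)) = D i j t \<theta>"
proof -
  have "\<theta> rmod (2*pi) = \<theta> + 2*pi * of_int (- \<lfloor>\<theta> / (2*pi)\<rfloor>)"
    by (simp add: rmod_def)
  then show ?thesis by (simp only: smooth_family_periodic_int[OF sf per t])
qed

section \<open>Solutions of the field equations\<close>

locale gowdy_solution =
  fixes P Q :: "real \<Rightarrow> real \<Rightarrow> real"
    and DP DQ :: "nat \<Rightarrow> nat \<Rightarrow> real \<Rightarrow> real \<Rightarrow> real"
    and \<tau>0 \<gamma> \<alpha> :: real
  assumes smP: "smooth_family \<tau>0 P DP" and smQ: "smooth_family \<tau>0 Q DQ"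
    and perP: "periodic_in_theta \<tau>0 P" and perQ: "periodic_in_theta \<tau>0 Q"
    and eqP: "\<And>t \<theta>. \<tau>0 \<le> t \<Longrightarrow>
       DP 2 0 t \<theta> - exp (- 2 * t) * DP 0 2 t \<theta>
       - exp (2 * P t \<theta>) * ((DQ 1 0 t \<theta>)\<^sup>2 - exp (- 2 * t) * (DQ 0 1 t \<theta>)\<^sup>2) = 0"
    and eqQ: "\<And>t \<theta>. \<tau>0 \<le> t \<Longrightarrow>
       DQ 2 0 t \<theta> - exp (- 2 * t) * DQ 0 2 t \<theta>
       + 2 * (DP 1 0 t \<theta> * DQ 1 0 t \<theta> - exp (- 2 * t) * DP 0 1 t \<theta> * DQ 0 1 t \<theta>) = 0"
    and t0: "\<tau>0 \<ge> 2"
    and Pbd: "\<And>\<theta>. 1 \<le> P \<tau>0 \<theta> \<and> P \<tau>0 \<theta> \<le> \<tau>0 - 1"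
    and Pgam: "\<And>\<theta>. \<gamma> \<le> P \<tau>0 \<theta> / \<tau>0 \<and> P \<tau>0 \<theta> / \<tau>0 \<le> 1 - \<gamma>"
    and alpha: "0 < \<alpha>" "\<alpha> < \<gamma>"
    and Fsmall: "Ffun DP DQ \<tau>0 \<le> (\<gamma> - \<alpha>)\<^sup>2"
begin

lemma P_equation: "\<tau>0 \<le> t \<Longrightarrow> DP 2 0 t \<theta> = (exp (- t))\<^sup>2 * DP 0 2 t \<theta>
   + (exp (DP 0 0 t \<theta>))\<^sup>2 * ((DQ 1 0 t \<theta>)\<^sup>2 - (exp (- t))\<^sup>2 * (DQ 0 1 t \<theta>)\<^sup>2)"
  using eqP[of t \<theta>] smooth_family_base[OF smP, of t \<theta>] unfolding exp_double by (simp add: algebra_simps)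

lemma Q_equation: "\<tau>0 \<le> t \<Longrightarrow> DQ 2 0 t \<theta> = (exp (- t))\<^sup>2 * DQ 0 2 t \<theta>
   - 2 * (DP 1 0 t \<theta> * DQ 1 0 t \<theta> - (exp (- t))\<^sup>2 * DP 0 1 t \<theta> * DQ 0 1 t \<theta>)"
  using eqQ[of t \<theta>] unfolding exp_double by (simp add: algebra_simps)

lemma DP_continuous: "continuous_on ({\<tau>0..} \<times> UNIV) (\<lambda>z. DP i j (fst z) (snd z))"
  using smooth_family_continuous[OF smP, of i j] by (simp add: split_beta)

lemma DQ_continuous: "continuous_on ({\<tau>0..} \<times> UNIV) (\<lambda>z. DQ i j (fst z) (snd z))"
  using smooth_family_continuous[OF smQ, of i j] by (simp add: split_beta)

lemmas DP_DQ_continuous_theta =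
  smooth_family_continuous_theta[OF smP] smooth_family_continuous_theta[OF smQ]

lemmas DP_DQ_rmod = smooth_family_rmod[OF smP perP] smooth_family_rmod[OF smQ perQ]

lemma P_at_start: "\<gamma> \<le> DP 0 0 \<tau>0 \<theta> / \<tau>0" "DP 0 0 \<tau>0 \<theta> / \<tau>0 \<le> 1 - \<gamma>"
  "1 \<le> DP 0 0 \<tau>0 \<theta>" "DP 0 0 \<tau>0 \<theta> \<le> \<tau>0 - 1"
  using Pgam[of \<theta>] Pbd[of \<theta>] smooth_family_base[OF smP, of \<tau>0 \<theta>] by auto

subsection \<open>Transport along characteristics\<close>

text \<open>Ffun DP DQ \<tau> = (sup Fp \<tau> + sup Fm \<tau>) / 2, the suprema taken over \<theta>.\<close>

definition "Ap t \<theta> = DP 1 0 t \<theta> + exp (- t) * DP 0 1 t \<theta> - DP 0 0 t \<theta> / t"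
definition "Am t \<theta> = DP 1 0 t \<theta> - exp (- t) * DP 0 1 t \<theta> - DP 0 0 t \<theta> / t"
definition "xp t \<theta> = exp (DP 0 0 t \<theta>) * (DQ 1 0 t \<theta> + exp (- t) * DQ 0 1 t \<theta>)"
definition "xm t \<theta> = exp (DP 0 0 t \<theta>) * (DQ 1 0 t \<theta> - exp (- t) * DQ 0 1 t \<theta>)"
definition "Fp t \<theta> = (Ap t \<theta>)\<^sup>2 + (xp t \<theta>)\<^sup>2"
definition "Fm t \<theta> = (Am t \<theta>)\<^sup>2 + (xm t \<theta>)\<^sup>2"

definition "F_coupling t \<theta> = (1 - 2 / t) * Ap t \<theta> * Am t \<theta> + (1 - 2 * DP 0 0 t \<theta> / t) * xp t \<theta> * xm t \<theta>"
definition "xp_coupling t \<theta> = (1 - 2 * (DP 1 0 t \<theta> + exp (- t) * DP 0 1 t \<theta>)) * xp t \<theta> * xm t \<theta>"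
definition "xm_coupling t \<theta> = (1 - 2 * (DP 1 0 t \<theta> - exp (- t) * DP 0 1 t \<theta>)) * xm t \<theta> * xp t \<theta>"

lemma continuous_Fp_Fm_x:
  "continuous_on ({\<tau>0..} \<times> UNIV) (\<lambda>(t, \<theta>). Fp t \<theta>)"
  "continuous_on ({\<tau>0..} \<times> UNIV) (\<lambda>(t, \<theta>). Fm t \<theta>)"
  "continuous_on ({\<tau>0..} \<times> UNIV) (\<lambda>(t, \<theta>). (xp t \<theta>)\<^sup>2)"
  "continuous_on ({\<tau>0..} \<times> UNIV) (\<lambda>(t, \<theta>). (xm t \<theta>)\<^sup>2)"
  unfolding Fp_def Fm_def Ap_def Am_def xp_def xm_def split_beta
  using t0 by (auto intro!: continuous_intros DP_continuous DQ_continuous)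

lemma Fp_Fm_x_rmod:
  assumes "\<tau>0 \<le> t"
  shows "Fp t (\<theta> rmod (2*pi)) = Fp t \<theta>" "Fm t (\<theta> rmod (2*pi)) = Fm t \<theta>"
    "xp t (\<theta> rmod (2*pi)) = xp t \<theta>" "xm t (\<theta> rmod (2*pi)) = xm t \<theta>"
  unfolding Fp_def Fm_def Ap_def Am_def xp_def xm_def by (simp_all only: DP_DQ_rmod[OF assms])

lemma characteristic_derivatives:
  fixes c \<sigma> s :: real
  assumes s: "\<tau>0 \<le> s" and \<sigma>: "\<sigma>\<^sup>2 = 1"
  defines "\<theta> \<equiv> \<lambda>s. c + \<sigma> * exp (- s)"
  defines "A \<equiv> \<lambda>s. DP 1 0 s (\<theta> s) + \<sigma> * exp (- s) * DP 0 1 s (\<theta> s) - DP 0 0 s (\<theta> s) / s"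
    and "A' \<equiv> \<lambda>s. DP 1 0 s (\<theta> s) - \<sigma> * exp (- s) * DP 0 1 s (\<theta> s) - DP 0 0 s (\<theta> s) / s"
    and "x \<equiv> \<lambda>s. exp (DP 0 0 s (\<theta> s)) * (DQ 1 0 s (\<theta> s) + \<sigma> * exp (- s) * DQ 0 1 s (\<theta> s))"
    and "x' \<equiv> \<lambda>s. exp (DP 0 0 s (\<theta> s)) * (DQ 1 0 s (\<theta> s) - \<sigma> * exp (- s) * DQ 0 1 s (\<theta> s))"
  shows "((\<lambda>s. (x s)\<^sup>2) has_real_derivative
           - (x s)\<^sup>2 + (1 - 2 * (DP 1 0 s (\<theta> s) + \<sigma> * exp (- s) * DP 0 1 s (\<theta> s))) * x s * x' s)
         (at s within {\<tau>0..})"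
    and "((\<lambda>s. (A s)\<^sup>2 + (x s)\<^sup>2) has_real_derivative
           - ((A s)\<^sup>2 + (x s)\<^sup>2) + (1 - 2 / s) * A s * A' s + (1 - 2 * DP 0 0 s (\<theta> s) / s) * x s * x' s)
         (at s within {\<tau>0..})"
proof -
  have s0: "s \<noteq> 0" using s t0 by auto
  let ?e = "exp (- s)" and ?E = "exp (DP 0 0 s (\<theta> s))"
  let ?d = "\<lambda>D i j. D (Suc i) j s (\<theta> s) - \<sigma> * exp (- s) * D i (Suc j) s (\<theta> s)"
  note along = smooth_family_along_characteristic[OF smP] smooth_family_along_characteristic[OF smQ]
  have dA: "(A has_real_derivative (?d DP 1 0 + (- \<sigma> * ?e * DP 0 1 s (\<theta> s) + \<sigma> * ?e * ?d DP 0 1)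
        - (?d DP 0 0 / s - DP 0 0 s (\<theta> s) / s\<^sup>2))) (at s within {\<tau>0..})"
    unfolding A_def \<theta>_def using s s0
    by (auto intro!: derivative_eq_intros along simp: field_simps power2_eq_square)
  have dx: "(x has_real_derivative (?E * ?d DP 0 0 * (DQ 1 0 s (\<theta> s) + \<sigma> * ?e * DQ 0 1 s (\<theta> s))
        + ?E * (?d DQ 1 0 - \<sigma> * ?e * DQ 0 1 s (\<theta> s) + \<sigma> * ?e * ?d DQ 0 1))) (at s within {\<tau>0..})"
    unfolding x_def \<theta>_def using s s0
    by (auto intro!: derivative_eq_intros along simp: field_simps power2_eq_square)
  note identity = characteristic_identity(1)[where qD="DQ 1 1 s (\<theta> s)",
      OF P_equation[OF s, of "\<theta> s"] Q_equation[OF s, of "\<theta> s"] s0 \<sigma>]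
    characteristic_identity(2)[where pA="DP 0 0 s (\<theta> s)" and pD="DP 1 1 s (\<theta> s)"
      and qD="DQ 1 1 s (\<theta> s)", OF P_equation[OF s, of "\<theta> s"] Q_equation[OF s, of "\<theta> s"] s0 \<sigma>]
  have "((\<lambda>s. (x s)\<^sup>2) has_real_derivative
      2 * x s * (?E * ?d DP 0 0 * (DQ 1 0 s (\<theta> s) + \<sigma> * ?e * DQ 0 1 s (\<theta> s))
        + ?E * (?d DQ 1 0 - \<sigma> * ?e * DQ 0 1 s (\<theta> s) + \<sigma> * ?e * ?d DQ 0 1))) (at s within {\<tau>0..})"
    by (auto intro!: derivative_eq_intros dx)
  then show "((\<lambda>s. (x s)\<^sup>2) has_real_derivative
           - (x s)\<^sup>2 + (1 - 2 * (DP 1 0 s (\<theta> s) + \<sigma> * exp (- s) * DP 0 1 s (\<theta> s))) * x s * x' s)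
         (at s within {\<tau>0..})"
    using identity(1) unfolding x_def x'_def by (simp add: numeral_2_eq_2)
  have "((\<lambda>s. (A s)\<^sup>2 + (x s)\<^sup>2) has_real_derivative
      2 * A s * (?d DP 1 0 + (- \<sigma> * ?e * DP 0 1 s (\<theta> s) + \<sigma> * ?e * ?d DP 0 1)
        - (?d DP 0 0 / s - DP 0 0 s (\<theta> s) / s\<^sup>2))
      + 2 * x s * (?E * ?d DP 0 0 * (DQ 1 0 s (\<theta> s) + \<sigma> * ?e * DQ 0 1 s (\<theta> s))
        + ?E * (?d DQ 1 0 - \<sigma> * ?e * DQ 0 1 s (\<theta> s) + \<sigma> * ?e * ?d DQ 0 1))) (at s within {\<tau>0..})"
    by (auto intro!: derivative_eq_intros dA dx)
  then show "((\<lambda>s. (A s)\<^sup>2 + (x s)\<^sup>2) has_real_derivative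
           - ((A s)\<^sup>2 + (x s)\<^sup>2) + (1 - 2 / s) * A s * A' s + (1 - 2 * DP 0 0 s (\<theta> s) / s) * x s * x' s)
         (at s within {\<tau>0..})"
    using identity(2) unfolding A_def A'_def x_def x'_def by (simp add: numeral_2_eq_2)
qed

lemma Fp_along_characteristic: "\<tau>0 \<le> s \<Longrightarrow> ((\<lambda>s. Fp s (c + exp (- s))) has_real_derivative
    - Fp s (c + exp (- s)) + F_coupling s (c + exp (- s))) (at s within {\<tau>0..})"
  using characteristic_derivatives(2)[of s 1 c] unfolding Fp_def F_coupling_def Ap_def Am_def xp_def xm_def
  by (simp add: ac_simps)

lemma Fm_along_characteristic: "\<tau>0 \<le> s \<Longrightarrow> ((\<lambda>s. Fm s (c - exp (- s))) has_real_derivative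
    - Fm s (c - exp (- s)) + F_coupling s (c - exp (- s))) (at s within {\<tau>0..})"
  using characteristic_derivatives(2)[of s "-1" c] unfolding Fm_def F_coupling_def Ap_def Am_def xp_def xm_def
  by (simp add: ac_simps)

lemma xp_along_characteristic: "\<tau>0 \<le> s \<Longrightarrow> ((\<lambda>s. (xp s (c + exp (- s)))\<^sup>2) has_real_derivative
    - (xp s (c + exp (- s)))\<^sup>2 + xp_coupling s (c + exp (- s))) (at s within {\<tau>0..})"
  using characteristic_derivatives(1)[of s 1 c] unfolding xp_coupling_def xp_def xm_def by simp

lemma xm_along_characteristic: "\<tau>0 \<le> s \<Longrightarrow> ((\<lambda>s. (xm s (c - exp (- s)))\<^sup>2) has_real_derivative
    - (xm s (c - exp (- s)))\<^sup>2 + xm_coupling s (c - exp (- s))) (at s within {\<tau>0..})"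
  using characteristic_derivatives(1)[of s "-1" c] unfolding xm_coupling_def xp_def xm_def by simp

lemma F_coupling_le:
  assumes "1 \<le> DP 0 0 t \<theta>" "DP 0 0 t \<theta> \<le> t - 1"
  shows "F_coupling t \<theta> \<le> (1 - 2 / t) * (Fp t \<theta> + Fm t \<theta>) / 2"
  unfolding F_coupling_def Fp_def Fm_def
  by (rule coupled_products_le[OF abs_one_minus_two_div_le[OF assms]])

subsection \<open>Decay of the Riemann invariants\<close>

text \<open>w = (\<tau>/\<tau>0)^-\<nu>. Then \<sigma>0 > \<gamma> - \<alpha> puts the initial data strictly below the barrier,
  \<nu> < 1 beats the factor 1 - 2/\<tau> in the coupling, and \<kappa> bounds the total drift of P/\<tau>.\<close>

definition "\<kappa> = \<gamma> - 3 * \<alpha> / 4"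
definition "\<sigma>0 = \<gamma> - 7 * \<alpha> / 8"
definition "\<nu> = \<sigma>0 / \<kappa>"
definition "w s = exp (- \<nu> * ln (s / \<tau>0))"
definition "barrier_F s = 2 * \<sigma>0\<^sup>2 * (w s)\<^sup>2"

lemma rate_constants: "0 < \<kappa>" "\<gamma> - \<alpha> < \<sigma>0" "0 < \<sigma>0" "\<sigma>0 < \<kappa>" "0 < \<nu>" "\<nu> < 1" "\<kappa> * \<nu> = \<sigma>0"
  using alpha unfolding \<kappa>_def \<sigma>0_def \<nu>_def by (auto simp: field_simps)

lemma w_pos: "0 < w s"
  unfolding w_def by simp

lemma w_start: "w \<tau>0 = 1"
  unfolding w_def using t0 by simp

lemma w_le_1: "\<tau>0 \<le> s \<Longrightarrow> w s \<le> 1"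
  unfolding w_def using t0 rate_constants(5) by (simp add: mult_nonneg_nonneg)

lemma w_deriv: "0 < s \<Longrightarrow> (w has_real_derivative - \<nu> / s * w s) (at s within S)"
  unfolding w_def using t0 by (auto intro!: derivative_eq_intros simp: field_simps)

lemma barrier_F_deriv: "0 < s \<Longrightarrow> (barrier_F has_real_derivative - 2 * \<nu> / s * barrier_F s) (at s within S)"
  unfolding barrier_F_def
  by (rule derivative_eq_intros w_deriv refl | assumption | simp add: field_simps power2_eq_square)+

lemma barrier_F_continuous: "continuous_on {\<tau>0..} barrier_F"
  by (rule DERIV_continuous_on[OF barrier_F_deriv]) (use t0 in auto)

lemma barrier_F_pos: "0 < barrier_F s"
  unfolding barrier_F_def using rate_constants w_pos[of s] by simp

lemma barrier_F_le: "\<tau>0 \<le> s \<Longrightarrow> barrier_F s \<le> 2 * \<sigma>0\<^sup>2"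
  unfolding barrier_F_def using w_le_1[of s] w_pos[of s] by (simp add: power_le_one mult_left_le)

lemma P_t_deviation_le:
  assumes "Fp s \<theta> + Fm s \<theta> \<le> barrier_F s"
  shows "\<bar>DP 1 0 s \<theta> - DP 0 0 s \<theta> / s\<bar> \<le> \<sigma>0 * w s"
proof -
  have sum: "Ap s \<theta> + Am s \<theta> = 2 * (DP 1 0 s \<theta> - DP 0 0 s \<theta> / s)"
    unfolding Ap_def Am_def by (simp add: algebra_simps)
  have "(2 * (DP 1 0 s \<theta> - DP 0 0 s \<theta> / s))\<^sup>2 \<le> 2 * ((Ap s \<theta>)\<^sup>2 + (Am s \<theta>)\<^sup>2)"
    unfolding sum[symmetric] using sum_squares_bound[of "Ap s \<theta>" "Am s \<theta>"] by (simp add: power2_sum)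
  also have "\<dots> \<le> 2 * barrier_F s"
    using assms zero_le_power2[of "xp s \<theta>"] zero_le_power2[of "xm s \<theta>"] unfolding Fp_def Fm_def distrib_left by linarith
  also have "\<dots> = (2 * (\<sigma>0 * w s))\<^sup>2" unfolding barrier_F_def by (simp add: power_mult_distrib)
  finally have "\<bar>2 * (DP 1 0 s \<theta> - DP 0 0 s \<theta> / s)\<bar> \<le> \<bar>2 * (\<sigma>0 * w s)\<bar>"
    by (simp only: abs_le_square_iff)
  then show ?thesis using rate_constants w_pos[of s] by simp
qed

text \<open>Since (P/\<tau>)' = (P_\<tau> - P/\<tau>)/\<tau> and (\<kappa> w)' = - \<sigma>0 w/\<tau>, the deviation bound makes
  \<plusminus>P/\<tau> - \<kappa> w nondecreasing.\<close>

lemma P_over_t_drift: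
  assumes dev: "\<And>u. \<tau>0 \<le> u \<Longrightarrow> u \<le> s \<Longrightarrow> \<bar>DP 1 0 u \<theta> - DP 0 0 u \<theta> / u\<bar> \<le> \<sigma>0 * w u"
    and s: "\<tau>0 \<le> s" and \<epsilon>: "\<bar>\<epsilon>\<bar> = 1"
  shows "\<epsilon> * (DP 0 0 \<tau>0 \<theta> / \<tau>0) - \<kappa> \<le> \<epsilon> * (DP 0 0 s \<theta> / s) - \<kappa> * w s"
proof -
  have "\<epsilon> * (DP 0 0 \<tau>0 \<theta> / \<tau>0) - \<kappa> * w \<tau>0 \<le> \<epsilon> * (DP 0 0 s \<theta> / s) - \<kappa> * w s"
  proof (rule nonneg_derivative_imp_le[OF _ _ s])
    fix u assume u: "\<tau>0 \<le> u" "u \<le> s"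
    then have u0: "0 < u" using t0 by simp
    show "((\<lambda>u. \<epsilon> * (DP 0 0 u \<theta> / u) - \<kappa> * w u) has_real_derivative
        (\<epsilon> * (DP 1 0 u \<theta> - DP 0 0 u \<theta> / u) + \<sigma>0 * w u) / u) (at u within {\<tau>0..})"
      using u u0 rate_constants(7)
      by (auto intro!: derivative_eq_intros smooth_family_deriv_t[OF smP] w_deriv simp: field_simps)
    have "\<bar>\<epsilon> * (DP 1 0 u \<theta> - DP 0 0 u \<theta> / u)\<bar> \<le> \<sigma>0 * w u"
      using dev[OF u] \<epsilon> by (simp add: abs_mult)
    then show "0 \<le> (\<epsilon> * (DP 1 0 u \<theta> - DP 0 0 u \<theta> / u) + \<sigma>0 * w u) / u"
      using u0 by (simp add: abs_le_iff)
  qed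
  then show ?thesis by (simp add: w_start)
qed

lemma P_drift_until:
  assumes G: "\<And>s \<theta>. \<tau>0 \<le> s \<Longrightarrow> s \<le> \<tau> \<Longrightarrow> Fp s \<theta> + Fm s \<theta> \<le> barrier_F s"
    and s: "\<tau>0 \<le> s" "s \<le> \<tau>"
  shows "3 * \<alpha> / 4 \<le> DP 0 0 s \<theta> / s" "DP 0 0 s \<theta> / s \<le> 1 - 3 * \<alpha> / 4"
    "3 * \<alpha> / 4 \<le> DP 1 0 s \<theta>" "DP 1 0 s \<theta> \<le> 1 - 3 * \<alpha> / 4"
proof -
  have dev: "\<bar>DP 1 0 u \<theta> - DP 0 0 u \<theta> / u\<bar> \<le> \<sigma>0 * w u" if "\<tau>0 \<le> u" "u \<le> s" for u
    using P_t_deviation_le G that s by simp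
  have up: "DP 0 0 \<tau>0 \<theta> / \<tau>0 - \<kappa> \<le> DP 0 0 s \<theta> / s - \<kappa> * w s"
    using P_over_t_drift[OF dev s(1), of 1] by simp
  have down: "- (DP 0 0 \<tau>0 \<theta> / \<tau>0) - \<kappa> \<le> - (DP 0 0 s \<theta> / s) - \<kappa> * w s"
    using P_over_t_drift[OF dev s(1), of "-1"] by simp
  have "\<sigma>0 * w s \<le> \<kappa> * w s" "0 \<le> \<sigma>0 * w s"
    using rate_constants w_pos[of s] by simp_all
  then show "3 * \<alpha> / 4 \<le> DP 0 0 s \<theta> / s" "DP 0 0 s \<theta> / s \<le> 1 - 3 * \<alpha> / 4"
    "3 * \<alpha> / 4 \<le> DP 1 0 s \<theta>" "DP 1 0 s \<theta> \<le> 1 - 3 * \<alpha> / 4"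
    using up down dev[OF s(1) order.refl] P_at_start(1,2)[of \<theta>]
    unfolding \<kappa>_def abs_le_iff by linarith+
qed

lemma P_bounds_until:
  assumes G: "\<And>s \<theta>. \<tau>0 \<le> s \<Longrightarrow> s \<le> \<tau> \<Longrightarrow> Fp s \<theta> + Fm s \<theta> \<le> barrier_F s" and \<tau>: "\<tau>0 \<le> \<tau>"
  shows "1 \<le> DP 0 0 \<tau> \<theta>" "DP 0 0 \<tau> \<theta> \<le> \<tau> - 1"
proof -
  have P_t: "0 \<le> DP (Suc 0) 0 u \<theta>" "DP (Suc 0) 0 u \<theta> \<le> 1" if "\<tau>0 \<le> u" "u \<le> \<tau>" for u
    using P_drift_until(3,4)[OF G that, of \<theta>] alpha by auto
  have "DP 0 0 \<tau>0 \<theta> \<le> DP 0 0 \<tau> \<theta>"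
    by (rule nonneg_derivative_imp_le[OF smooth_family_deriv_t[OF smP] _ \<tau>]) (auto intro: P_t)
  moreover have "\<tau>0 - DP 0 0 \<tau>0 \<theta> \<le> \<tau> - DP 0 0 \<tau> \<theta>"
    by (rule nonneg_derivative_imp_le[OF _ _ \<tau>])
       (auto intro!: derivative_eq_intros smooth_family_deriv_t[OF smP] P_t)
  ultimately show "1 \<le> DP 0 0 \<tau> \<theta>" "DP 0 0 \<tau> \<theta> \<le> \<tau> - 1"
    using P_at_start(3,4)[of \<theta>] by auto
qed

lemma F_sum_at_start: "Fp \<tau>0 \<theta> + Fm \<tau>0 \<theta>' \<le> 2 * (\<gamma> - \<alpha>)\<^sup>2"
proof -
  define f1 where "f1 \<theta> = (DP 1 0 \<tau>0 \<theta> - DP 0 0 \<tau>0 \<theta> / \<tau>0 + exp (- \<tau>0) * DP 0 1 \<tau>0 \<theta>)\<^sup>2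
    + exp (2 * DP 0 0 \<tau>0 \<theta>) * (DQ 1 0 \<tau>0 \<theta> + exp (- \<tau>0) * DQ 0 1 \<tau>0 \<theta>)\<^sup>2" for \<theta>
  define f2 where "f2 \<theta> = (DP 1 0 \<tau>0 \<theta> - DP 0 0 \<tau>0 \<theta> / \<tau>0 - exp (- \<tau>0) * DP 0 1 \<tau>0 \<theta>)\<^sup>2
    + exp (2 * DP 0 0 \<tau>0 \<theta>) * (DQ 1 0 \<tau>0 \<theta> - exp (- \<tau>0) * DQ 0 1 \<tau>0 \<theta>)\<^sup>2" for \<theta>
  have "continuous_on {0..2*pi} f1" "continuous_on {0..2*pi} f2"
    unfolding f1_def f2_def using t0 by (auto intro!: continuous_intros DP_DQ_continuous_theta)
  moreover have "Fp \<tau>0 \<theta> = f1 \<theta>" "Fm \<tau>0 \<theta> = f2 \<theta>" for \<theta>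
    unfolding Fp_def Ap_def xp_def Fm_def Am_def xm_def f1_def f2_def exp_double
    by (simp_all add: power2_eq_square algebra_simps)
  ultimately have "Fp \<tau>0 \<theta> + Fm \<tau>0 \<theta>' \<le> (SUP \<theta>\<in>{0..2*pi}. f1 \<theta>) + (SUP \<theta>\<in>{0..2*pi}. f2 \<theta>)"
    using Fp_Fm_x_rmod(1,2)[of \<tau>0] by (metis add_mono le_SUP_continuous_on_Icc rmod_2pi_mem order_refl)
  also have "\<dots> = 2 * Ffun DP DQ \<tau>0" unfolding Ffun_def f1_def f2_def by simp
  finally show ?thesis using Fsmall by simp
qed

lemma F_rates_at_touching:
  assumes \<tau>1: "\<tau>0 < \<tau>1"
    and G: "\<And>s \<theta> \<theta>'. \<tau>0 \<le> s \<Longrightarrow> s \<le> \<tau>1 \<Longrightarrow> Fp s \<theta> + Fm s \<theta>' \<le> barrier_F s"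
    and touch: "Fp \<tau>1 \<theta>1 + Fm \<tau>1 \<theta>1' = barrier_F \<tau>1"
  shows "(- Fp \<tau>1 \<theta>1 + F_coupling \<tau>1 \<theta>1) + (- Fm \<tau>1 \<theta>1' + F_coupling \<tau>1 \<theta>1')
      < - 2 * \<nu> / \<tau>1 * barrier_F \<tau>1"
proof -
  have \<tau>1': "\<tau>0 \<le> \<tau>1" "2 \<le> \<tau>1" using \<tau>1 t0 by auto
  have coupling: "F_coupling \<tau>1 \<theta> \<le> (1 - 2 / \<tau>1) * barrier_F \<tau>1 / 2" for \<theta>
  proof -
    have "F_coupling \<tau>1 \<theta> \<le> (1 - 2 / \<tau>1) * (Fp \<tau>1 \<theta> + Fm \<tau>1 \<theta>) / 2"
      using P_bounds_until[OF G \<tau>1'(1)] by (rule F_coupling_le)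
    also have "\<dots> \<le> (1 - 2 / \<tau>1) * barrier_F \<tau>1 / 2"
      using G[OF \<tau>1'(1) order_refl, of \<theta> \<theta>] \<tau>1' by (intro divide_right_mono mult_left_mono) auto
    finally show ?thesis .
  qed
  have "2 * \<nu> / \<tau>1 * barrier_F \<tau>1 < 2 / \<tau>1 * barrier_F \<tau>1"
    using rate_constants barrier_F_pos[of \<tau>1] \<tau>1' by (intro mult_strict_right_mono divide_strict_right_mono) auto
  then show ?thesis using coupling[of \<theta>1] coupling[of \<theta>1'] touch by (simp add: algebra_simps)
qed

lemma F_sum_below_barrier:
  assumes "\<tau>0 \<le> t"
  shows "Fp t \<theta> + Fm t \<theta>' < barrier_F t"
proof (rule characteristic_barrier[OF continuous_Fp_Fm_x(1,2) barrier_F_continuous _ _ _ _ assms])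
  show "\<exists>\<theta>0\<in>{0..2*pi}. Fp t \<theta> = Fp t \<theta>0" "\<exists>\<theta>0\<in>{0..2*pi}. Fm t \<theta> = Fm t \<theta>0"
    if "\<tau>0 \<le> t" for t \<theta>
    using Fp_Fm_x_rmod[OF that] rmod_2pi_mem by metis+
  have "(\<gamma> - \<alpha>)\<^sup>2 < \<sigma>0\<^sup>2" using rate_constants alpha by (intro power_strict_mono) auto
  then show "Fp \<tau>0 \<theta> + Fm \<tau>0 \<theta>' < barrier_F \<tau>0" for \<theta> \<theta>'
    using F_sum_at_start[of \<theta> \<theta>'] by (simp add: barrier_F_def w_start)
next
  fix \<tau>1 \<theta>1 \<theta>1'
  assume \<tau>1: "\<tau>0 < \<tau>1"
    and G: "\<And>s \<theta> \<theta>'. \<tau>0 \<le> s \<Longrightarrow> s \<le> \<tau>1 \<Longrightarrow> Fp s \<theta> + Fm s \<theta>' \<le> barrier_F s"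
    and touch: "Fp \<tau>1 \<theta>1 + Fm \<tau>1 \<theta>1' = barrier_F \<tau>1"
  have \<tau>1': "\<tau>0 \<le> \<tau>1" using \<tau>1 by auto
  note less = F_rates_at_touching[OF \<tau>1 G touch]
  have "((\<lambda>s. Fp s (\<theta>1 - exp (- \<tau>1) + exp (- s))) has_real_derivative - Fp \<tau>1 \<theta>1 + F_coupling \<tau>1 \<theta>1)
      (at \<tau>1 within {\<tau>0..})"
    using Fp_along_characteristic[OF \<tau>1', of "\<theta>1 - exp (- \<tau>1)"] by simp
  moreover have "((\<lambda>s. Fm s (\<theta>1' + exp (- \<tau>1) - exp (- s))) has_real_derivative
      - Fm \<tau>1 \<theta>1' + F_coupling \<tau>1 \<theta>1') (at \<tau>1 within {\<tau>0..})"
    using Fm_along_characteristic[OF \<tau>1', of "\<theta>1' + exp (- \<tau>1)"] by simp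
  moreover have "(barrier_F has_real_derivative - 2 * \<nu> / \<tau>1 * barrier_F \<tau>1) (at \<tau>1 within {\<tau>0..})"
    using \<tau>1' t0 by (intro barrier_F_deriv) auto
  ultimately show "\<exists>g1 g2 b.
      ((\<lambda>s. Fp s (\<theta>1 - exp (- \<tau>1) + exp (- s))) has_real_derivative g1) (at \<tau>1 within {\<tau>0..})
      \<and> ((\<lambda>s. Fm s (\<theta>1' + exp (- \<tau>1) - exp (- s))) has_real_derivative g2) (at \<tau>1 within {\<tau>0..})
      \<and> (barrier_F has_real_derivative b) (at \<tau>1 within {\<tau>0..}) \<and> g1 + g2 < b"
    using less by blast
qed

lemma F_sum_le_barrier: "\<tau>0 \<le> t \<Longrightarrow> Fp t \<theta> + Fm t \<theta>' \<le> barrier_F t"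
  using F_sum_below_barrier less_imp_le by blast

lemma P_drift:
  assumes "\<tau>0 \<le> s"
  shows "3 * \<alpha> / 4 \<le> DP 0 0 s \<theta> / s" "DP 0 0 s \<theta> / s \<le> 1 - 3 * \<alpha> / 4"
    "3 * \<alpha> / 4 \<le> DP 1 0 s \<theta>" "DP 1 0 s \<theta> \<le> 1 - 3 * \<alpha> / 4"
  using P_drift_until[OF F_sum_le_barrier assms order_refl] by auto

lemma alpha_lt_half: "\<alpha> < 1 / 2"
  using Pgam[of 0] alpha by simp

definition "T1 = \<tau>0 * exp (max 0 (ln (8 * \<sigma>0 / \<alpha>)) / \<nu>)"

lemma T1_ge: "\<tau>0 \<le> T1"
  unfolding T1_def using t0 rate_constants by simp

lemma barrier_F_small:
  assumes s: "T1 \<le> s"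
  shows "barrier_F s \<le> (\<alpha> / 4)\<^sup>2"
proof -
  have \<tau>0: "0 < \<tau>0" using t0 by simp
  have "max 0 (ln (8 * \<sigma>0 / \<alpha>)) / \<nu> = ln (T1 / \<tau>0)" unfolding T1_def using \<tau>0 by simp
  also have "\<dots> \<le> ln (s / \<tau>0)" using s T1_ge \<tau>0 by (simp add: divide_right_mono)
  finally have "ln (8 * \<sigma>0 / \<alpha>) \<le> \<nu> * ln (s / \<tau>0)"
    using rate_constants by (simp add: pos_divide_le_eq mult.commute)
  then have "w s \<le> exp (- ln (8 * \<sigma>0 / \<alpha>))" unfolding w_def by simp
  also have "\<dots> = \<alpha> / (8 * \<sigma>0)" using alpha rate_constants by (simp add: exp_minus)
  finally have "(w s)\<^sup>2 \<le> (\<alpha> / (8 * \<sigma>0))\<^sup>2" using w_pos[of s] by (simp add: power_mono)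
  then have "barrier_F s \<le> 2 * \<sigma>0\<^sup>2 * (\<alpha> / (8 * \<sigma>0))\<^sup>2"
    unfolding barrier_F_def by (simp add: mult_left_mono)
  also have "\<dots> \<le> (\<alpha> / 4)\<^sup>2" using rate_constants by (simp add: field_simps power2_eq_square)
  finally show ?thesis .
qed

text \<open>Once |A\<plusminus>| \<le> \<alpha>/4, the drift bounds put P_\<tau> \<plusminus> e^-\<tau> P_\<theta> = P/\<tau> + A\<plusminus> in
  [\<alpha>/2, 1 - \<alpha>/2], so the couplings of x\<plusminus> lose a factor 1 - \<alpha>.\<close>

lemma x_couplings_le:
  assumes s: "T1 \<le> s"
  shows "2 * xp_coupling s \<theta> \<le> (1 - \<alpha>) * ((xp s \<theta>)\<^sup>2 + (xm s \<theta>)\<^sup>2)"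
    "2 * xm_coupling s \<theta> \<le> (1 - \<alpha>) * ((xp s \<theta>)\<^sup>2 + (xm s \<theta>)\<^sup>2)"
proof -
  have s0: "\<tau>0 \<le> s" using s T1_ge by simp
  have "(Ap s \<theta>)\<^sup>2 \<le> (\<alpha> / 4)\<^sup>2" "(Am s \<theta>)\<^sup>2 \<le> (\<alpha> / 4)\<^sup>2"
    using F_sum_le_barrier[OF s0, of \<theta> \<theta>] barrier_F_small[OF s]
      zero_le_power2[of "xp s \<theta>"] zero_le_power2[of "xm s \<theta>"] zero_le_power2[of "Ap s \<theta>"]
      zero_le_power2[of "Am s \<theta>"]
    unfolding Fp_def Fm_def by linarith+
  then have Ap: "\<bar>Ap s \<theta>\<bar> \<le> \<alpha> / 4" and Am: "\<bar>Am s \<theta>\<bar> \<le> \<alpha> / 4"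
    using alpha by (simp_all add: abs_le_square_iff[symmetric])
  define p where "p = DP 0 0 s \<theta> / s"
  have p: "3 * \<alpha> / 4 \<le> p" "p \<le> 1 - 3 * \<alpha> / 4" unfolding p_def using P_drift(1,2)[OF s0] by auto
  have "DP 1 0 s \<theta> + exp (- s) * DP 0 1 s \<theta> = p + Ap s \<theta>" unfolding Ap_def p_def by simp
  then have cp: "\<bar>1 - 2 * (DP 1 0 s \<theta> + exp (- s) * DP 0 1 s \<theta>)\<bar> \<le> 1 - \<alpha>"
    using Ap p unfolding abs_le_iff distrib_left by (elim conjE, intro conjI) linarith+
  have "DP 1 0 s \<theta> - exp (- s) * DP 0 1 s \<theta> = p + Am s \<theta>" unfolding Am_def p_def by simp
  then have cm: "\<bar>1 - 2 * (DP 1 0 s \<theta> - exp (- s) * DP 0 1 s \<theta>)\<bar> \<le> 1 - \<alpha>"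
    using Am p unfolding abs_le_iff right_diff_distrib by (elim conjE, intro conjI) linarith+
  show "2 * xp_coupling s \<theta> \<le> (1 - \<alpha>) * ((xp s \<theta>)\<^sup>2 + (xm s \<theta>)\<^sup>2)"
    using mult3_le_sum_squares[OF cp, of "xp s \<theta>" "xm s \<theta>"]
    unfolding xp_coupling_def by (simp only: mult.assoc)
  show "2 * xm_coupling s \<theta> \<le> (1 - \<alpha>) * ((xp s \<theta>)\<^sup>2 + (xm s \<theta>)\<^sup>2)"
    using mult3_le_sum_squares[OF cm, of "xm s \<theta>" "xp s \<theta>"]
    unfolding xm_coupling_def by (simp only: mult.assoc add.commute)
qed

definition "barrier_x s = barrier_F T1 * exp (- (3 * \<alpha> / 4) * (s - T1))"

lemma barrier_x_deriv: "(barrier_x has_real_derivative - (3 * \<alpha> / 4) * barrier_x s) (at s within S)"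
  unfolding barrier_x_def by (auto intro!: derivative_eq_intros)

lemma x_rates_at_touching:
  assumes \<tau>1: "T1 < \<tau>1"
    and G: "\<And>s \<theta> \<theta>'. T1 \<le> s \<Longrightarrow> s \<le> \<tau>1 \<Longrightarrow> (xp s \<theta>)\<^sup>2 + (xm s \<theta>')\<^sup>2 \<le> barrier_x s"
    and touch: "(xp \<tau>1 \<theta>1)\<^sup>2 + (xm \<tau>1 \<theta>1')\<^sup>2 = barrier_x \<tau>1"
  shows "(- (xp \<tau>1 \<theta>1)\<^sup>2 + xp_coupling \<tau>1 \<theta>1) + (- (xm \<tau>1 \<theta>1')\<^sup>2 + xm_coupling \<tau>1 \<theta>1')
      < - (3 * \<alpha> / 4) * barrier_x \<tau>1"
proof -
  have \<tau>1': "T1 \<le> \<tau>1" using \<tau>1 by simp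
  have "(1 - \<alpha>) * ((xp \<tau>1 \<theta>)\<^sup>2 + (xm \<tau>1 \<theta>)\<^sup>2) \<le> (1 - \<alpha>) * barrier_x \<tau>1" for \<theta>
    using G[OF \<tau>1' order_refl, of \<theta> \<theta>] alpha_lt_half by (intro mult_left_mono) auto
  then have "xp_coupling \<tau>1 \<theta>1 + xm_coupling \<tau>1 \<theta>1' \<le> (1 - \<alpha>) * barrier_x \<tau>1"
    using x_couplings_le(1)[OF \<tau>1', of \<theta>1] x_couplings_le(2)[OF \<tau>1', of \<theta>1'] by (smt (verit))
  moreover have "0 < \<alpha> * barrier_x \<tau>1" unfolding barrier_x_def using alpha barrier_F_pos by simp
  ultimately show ?thesis using touch by (simp add: algebra_simps)
qed

lemma x_sum_below_barrier:
  assumes "T1 \<le> t"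
  shows "(xp t \<theta>)\<^sup>2 + (xm t \<theta>')\<^sup>2 < barrier_x t"
proof (rule characteristic_barrier[where Gp="\<lambda>t \<theta>. (xp t \<theta>)\<^sup>2" and Gm="\<lambda>t \<theta>. (xm t \<theta>)\<^sup>2",
      OF _ _ DERIV_continuous_on[OF barrier_x_deriv] _ _ _ _ assms])
  have sub: "{T1..} \<times> UNIV \<subseteq> {\<tau>0..} \<times> UNIV" using T1_ge by auto
  show "continuous_on ({T1..} \<times> UNIV) (\<lambda>(t, \<theta>). (xp t \<theta>)\<^sup>2)"
    "continuous_on ({T1..} \<times> UNIV) (\<lambda>(t, \<theta>). (xm t \<theta>)\<^sup>2)"
    by (rule continuous_on_subset[OF continuous_Fp_Fm_x(3) sub] continuous_on_subset[OF continuous_Fp_Fm_x(4) sub])+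
  show "\<exists>\<theta>0\<in>{0..2*pi}. (xp t \<theta>)\<^sup>2 = (xp t \<theta>0)\<^sup>2" "\<exists>\<theta>0\<in>{0..2*pi}. (xm t \<theta>)\<^sup>2 = (xm t \<theta>0)\<^sup>2"
    if "T1 \<le> t" for t \<theta>
    using Fp_Fm_x_rmod(3,4)[of t \<theta>] rmod_2pi_mem that T1_ge by (metis order_trans)+
  have "barrier_x T1 = barrier_F T1" unfolding barrier_x_def by simp
  then show "(xp T1 \<theta>)\<^sup>2 + (xm T1 \<theta>')\<^sup>2 < barrier_x T1" for \<theta> \<theta>'
    using F_sum_below_barrier[OF T1_ge, of \<theta> \<theta>'] zero_le_power2[of "Ap T1 \<theta>"] zero_le_power2[of "Am T1 \<theta>'"]
    unfolding Fp_def Fm_def by linarith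
next
  fix \<tau>1 \<theta>1 \<theta>1'
  assume \<tau>1: "T1 < \<tau>1"
    and G: "\<And>s \<theta> \<theta>'. T1 \<le> s \<Longrightarrow> s \<le> \<tau>1 \<Longrightarrow> (xp s \<theta>)\<^sup>2 + (xm s \<theta>')\<^sup>2 \<le> barrier_x s"
    and touch: "(xp \<tau>1 \<theta>1)\<^sup>2 + (xm \<tau>1 \<theta>1')\<^sup>2 = barrier_x \<tau>1"
  have \<tau>1': "\<tau>0 \<le> \<tau>1" using \<tau>1 T1_ge by auto
  note less = x_rates_at_touching[OF \<tau>1 G touch]
  have "((\<lambda>s. (xp s (\<theta>1 - exp (- \<tau>1) + exp (- s)))\<^sup>2) has_real_derivative
      - (xp \<tau>1 \<theta>1)\<^sup>2 + xp_coupling \<tau>1 \<theta>1) (at \<tau>1 within {T1..})"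
    using has_field_derivative_subset[OF xp_along_characteristic[OF \<tau>1', of "\<theta>1 - exp (- \<tau>1)"],
        of "{T1..}"] T1_ge by simp
  moreover have "((\<lambda>s. (xm s (\<theta>1' + exp (- \<tau>1) - exp (- s)))\<^sup>2) has_real_derivative
      - (xm \<tau>1 \<theta>1')\<^sup>2 + xm_coupling \<tau>1 \<theta>1') (at \<tau>1 within {T1..})"
    using has_field_derivative_subset[OF xm_along_characteristic[OF \<tau>1', of "\<theta>1' + exp (- \<tau>1)"],
        of "{T1..}"] T1_ge by simp
  ultimately show "\<exists>g1 g2 b.
      ((\<lambda>s. (xp s (\<theta>1 - exp (- \<tau>1) + exp (- s)))\<^sup>2) has_real_derivative g1) (at \<tau>1 within {T1..})
      \<and> ((\<lambda>s. (xm s (\<theta>1' + exp (- \<tau>1) - exp (- s)))\<^sup>2) has_real_derivative g2) (at \<tau>1 within {T1..})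
      \<and> (barrier_x has_real_derivative b) (at \<tau>1 within {T1..}) \<and> g1 + g2 < b"
    using less barrier_x_deriv by blast
qed

definition "x_decay_const = 2 * \<sigma>0\<^sup>2 * exp (3 * \<alpha> / 4 * T1)"

lemma x_decay_const_nonneg: "0 \<le> x_decay_const"
  unfolding x_decay_const_def by simp

lemma x_decay:
  assumes s: "\<tau>0 \<le> s"
  shows "(xp s \<theta>)\<^sup>2 + (xm s \<theta>)\<^sup>2 \<le> x_decay_const * exp (- (3 * \<alpha> / 4) * s)"
proof (cases "T1 \<le> s")
  case True
  have "(xp s \<theta>)\<^sup>2 + (xm s \<theta>)\<^sup>2 \<le> barrier_x s" using x_sum_below_barrier[OF True, of \<theta> \<theta>] by simp
  also have "\<dots> = barrier_F T1 * exp (3 * \<alpha> / 4 * T1) * exp (- (3 * \<alpha> / 4) * s)"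
  proof -
    have "exp (- (3 * \<alpha> / 4) * (s - T1)) = exp (3 * \<alpha> / 4 * T1) * exp (- (3 * \<alpha> / 4) * s)"
      unfolding exp_add[symmetric] by (simp add: field_simps)
    then show ?thesis unfolding barrier_x_def by (simp add: mult.assoc)
  qed
  also have "\<dots> \<le> x_decay_const * exp (- (3 * \<alpha> / 4) * s)"
    unfolding x_decay_const_def using barrier_F_le[OF T1_ge] by simp
  finally show ?thesis .
next
  case False
  have "(xp s \<theta>)\<^sup>2 + (xm s \<theta>)\<^sup>2 \<le> Fp s \<theta> + Fm s \<theta>" unfolding Fp_def Fm_def by simp
  also have "\<dots> \<le> 2 * \<sigma>0\<^sup>2" using F_sum_le_barrier[OF s] barrier_F_le[OF s] by (rule order_trans)
  also have "\<dots> \<le> x_decay_const * exp (- (3 * \<alpha> / 4) * s)"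
  proof -
    have "0 \<le> 3 * \<alpha> / 4 * (T1 - s)" using False alpha by simp
    then have "1 \<le> exp (3 * \<alpha> / 4 * T1) * exp (- (3 * \<alpha> / 4) * s)"
      by (simp add: algebra_simps flip: exp_add)
    from mult_left_mono[OF this, of "2 * \<sigma>0\<^sup>2"] show ?thesis
      unfolding x_decay_const_def by (simp add: mult.assoc)
  qed
  finally show ?thesis .
qed

subsection \<open>The first-order energy\<close>

lemma P_equation_dtheta:
  assumes t: "\<tau>0 \<le> t"
  shows "DP 2 1 t \<theta> = (exp (- t))\<^sup>2 * DP 0 3 t \<theta>
     + 2 * DP 0 1 t \<theta> * (exp (DP 0 0 t \<theta>))\<^sup>2 * ((DQ 1 0 t \<theta>)\<^sup>2 - (exp (- t))\<^sup>2 * (DQ 0 1 t \<theta>)\<^sup>2)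
     + (exp (DP 0 0 t \<theta>))\<^sup>2 * (2 * DQ 1 0 t \<theta> * DQ 1 1 t \<theta> - 2 * (exp (- t))\<^sup>2 * DQ 0 1 t \<theta> * DQ 0 2 t \<theta>)"
proof -
  let ?f = "\<lambda>\<phi>. DP 2 0 t \<phi> - ((exp (- t))\<^sup>2 * DP 0 2 t \<phi>
     + (exp (DP 0 0 t \<phi>))\<^sup>2 * ((DQ 1 0 t \<phi>)\<^sup>2 - (exp (- t))\<^sup>2 * (DQ 0 1 t \<phi>)\<^sup>2))"
  have "(?f has_real_derivative DP 2 1 t \<theta> - ((exp (- t))\<^sup>2 * DP 0 3 t \<theta>
     + 2 * DP 0 1 t \<theta> * (exp (DP 0 0 t \<theta>))\<^sup>2 * ((DQ 1 0 t \<theta>)\<^sup>2 - (exp (- t))\<^sup>2 * (DQ 0 1 t \<theta>)\<^sup>2)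
     + (exp (DP 0 0 t \<theta>))\<^sup>2 * (2 * DQ 1 0 t \<theta> * DQ 1 1 t \<theta> - 2 * (exp (- t))\<^sup>2 * DQ 0 1 t \<theta> * DQ 0 2 t \<theta>)))
     (at \<theta>)"
    by (auto intro!: derivative_eq_intros smooth_family_deriv_theta[OF smP t] smooth_family_deriv_theta[OF smQ t]
        simp: numeral_eq_Suc power2_eq_square algebra_simps)
  from derivative_of_vanishing_eq_0[OF _ this] show ?thesis using P_equation[OF t] by simp
qed

lemma Q_equation_dtheta:
  assumes t: "\<tau>0 \<le> t"
  shows "DQ 2 1 t \<theta> = (exp (- t))\<^sup>2 * DQ 0 3 t \<theta>
     - 2 * (DP 1 1 t \<theta> * DQ 1 0 t \<theta> + DP 1 0 t \<theta> * DQ 1 1 t \<theta> - (exp (- t))\<^sup>2 * DP 0 2 t \<theta> * DQ 0 1 t \<theta>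
            - (exp (- t))\<^sup>2 * DP 0 1 t \<theta> * DQ 0 2 t \<theta>)"
proof -
  let ?f = "\<lambda>\<phi>. DQ 2 0 t \<phi> - ((exp (- t))\<^sup>2 * DQ 0 2 t \<phi>
     - 2 * (DP 1 0 t \<phi> * DQ 1 0 t \<phi> - (exp (- t))\<^sup>2 * DP 0 1 t \<phi> * DQ 0 1 t \<phi>))"
  have "(?f has_real_derivative DQ 2 1 t \<theta> - ((exp (- t))\<^sup>2 * DQ 0 3 t \<theta>
     - 2 * (DP 1 1 t \<theta> * DQ 1 0 t \<theta> + DP 1 0 t \<theta> * DQ 1 1 t \<theta> - (exp (- t))\<^sup>2 * DP 0 2 t \<theta> * DQ 0 1 t \<theta>
            - (exp (- t))\<^sup>2 * DP 0 1 t \<theta> * DQ 0 2 t \<theta>))) (at \<theta>)"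
    by (auto intro!: derivative_eq_intros smooth_family_deriv_theta[OF smP t] smooth_family_deriv_theta[OF smQ t]
        simp: numeral_eq_Suc power2_eq_square algebra_simps)
  from derivative_of_vanishing_eq_0[OF _ this] show ?thesis using Q_equation[OF t] by simp
qed

definition "weight t = exp (- (\<alpha> / 2) * t)"

definition "energy_density t \<theta> = 1/2 * ((DP 1 1 t \<theta>)\<^sup>2 + (exp (- t))\<^sup>2 * (DP 0 2 t \<theta>)\<^sup>2
   + (exp (DP 0 0 t \<theta>))\<^sup>2 * ((DQ 1 1 t \<theta>)\<^sup>2 + (exp (- t))\<^sup>2 * (DQ 0 2 t \<theta>)\<^sup>2) + (weight t)\<^sup>2 * (DP 0 1 t \<theta>)\<^sup>2)"

definition "energy_density_dt t \<theta> =
   DP 1 1 t \<theta> * DP 2 1 t \<theta> - (exp (- t))\<^sup>2 * (DP 0 2 t \<theta>)\<^sup>2 + (exp (- t))\<^sup>2 * DP 0 2 t \<theta> * DP 1 2 t \<theta>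
   + (exp (DP 0 0 t \<theta>))\<^sup>2 * DP 1 0 t \<theta> * ((DQ 1 1 t \<theta>)\<^sup>2 + (exp (- t))\<^sup>2 * (DQ 0 2 t \<theta>)\<^sup>2)
   + (exp (DP 0 0 t \<theta>))\<^sup>2 * (DQ 1 1 t \<theta> * DQ 2 1 t \<theta> - (exp (- t))\<^sup>2 * (DQ 0 2 t \<theta>)\<^sup>2
      + (exp (- t))\<^sup>2 * DQ 0 2 t \<theta> * DQ 1 2 t \<theta>)
   - \<alpha> / 2 * (weight t)\<^sup>2 * (DP 0 1 t \<theta>)\<^sup>2 + (weight t)\<^sup>2 * DP 0 1 t \<theta> * DP 1 1 t \<theta>"

lemma energy_density_deriv:
  "\<tau>0 \<le> t \<Longrightarrow> ((\<lambda>s. energy_density s \<theta>) has_real_derivative energy_density_dt t \<theta>) (at t within {\<tau>0..})"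
  unfolding energy_density_def energy_density_dt_def weight_def
  by (auto intro!: derivative_eq_intros smooth_family_deriv_t[OF smP] smooth_family_deriv_t[OF smQ]
      simp: numeral_eq_Suc One_nat_def power2_eq_square field_simps)

lemma energy_density_nonneg: "0 \<le> energy_density t \<theta>"
  unfolding energy_density_def by simp

lemma energy_density_integrable: "\<tau>0 \<le> t \<Longrightarrow> energy_density t integrable_on {0..2*pi}"
  unfolding energy_density_def weight_def
  by (intro integrable_continuous_interval continuous_intros DP_DQ_continuous_theta) auto

lemma energy_integral_deriv:
  assumes t: "\<tau>0 \<le> t"
  shows "((\<lambda>t. integral {0..2*pi} (energy_density t)) has_real_derivative
      integral {0..2*pi} (energy_density_dt t)) (at t within {\<tau>0..})"
proof -
  have "continuous_on ({\<tau>0..} \<times> UNIV) (\<lambda>(t, \<theta>). energy_density_dt t \<theta>)"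
    unfolding energy_density_dt_def weight_def split_beta
    by (intro continuous_intros DP_continuous DQ_continuous)
  then have "((\<lambda>t. integral (cbox 0 (2*pi)) (energy_density t)) has_real_derivative
      integral (cbox 0 (2*pi)) (energy_density_dt t)) (at t within {\<tau>0..})"
    using energy_density_deriv energy_density_integrable t
    by (intro leibniz_rule_field_derivative) (auto intro: continuous_on_subset)
  then show ?thesis by simp
qed

lemma Hk1_eq: "\<tau>0 \<le> t \<Longrightarrow> Hk \<alpha> DP DQ 1 t = 1 + integral {0..2*pi} (energy_density t)"
proof -
  assume t: "\<tau>0 \<le> t"
  let ?f1 = "\<lambda>\<theta>. (DP 1 1 t \<theta>)\<^sup>2 + (exp (- t))\<^sup>2 * (DP 0 2 t \<theta>)\<^sup>2"
  let ?f2 = "\<lambda>\<theta>. (exp (DP 0 0 t \<theta>))\<^sup>2 * ((DQ 1 1 t \<theta>)\<^sup>2 + (exp (- t))\<^sup>2 * (DQ 0 2 t \<theta>)\<^sup>2)"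
  let ?f3 = "\<lambda>\<theta>. (DP 0 1 t \<theta>)\<^sup>2"
  have "?f1 integrable_on {0..2*pi}" "?f2 integrable_on {0..2*pi}"
    "(\<lambda>\<theta>. (weight t)\<^sup>2 * ?f3 \<theta>) integrable_on {0..2*pi}"
    by (intro integrable_continuous_interval continuous_intros DP_DQ_continuous_theta t)+
  moreover have "energy_density t = (\<lambda>\<theta>. 1/2 * ((?f1 \<theta> + ?f2 \<theta>) + (weight t)\<^sup>2 * ?f3 \<theta>))"
    unfolding energy_density_def by (auto simp: fun_eq_iff)
  ultimately have "integral {0..2*pi} (energy_density t)
      = 1/2 * (integral {0..2*pi} ?f1 + integral {0..2*pi} ?f2 + (weight t)\<^sup>2 * integral {0..2*pi} ?f3)"
    by (simp add: integral_add integrable_add)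
  moreover have "Hk \<alpha> DP DQ 1 t = 1 + 1/2 * integral {0..2*pi} ?f1 + 1/2 * integral {0..2*pi} ?f2
      + 1/2 * (weight t)\<^sup>2 * integral {0..2*pi} ?f3"
    unfolding Hk_def curlyE_def Eng_def weight_def exp_double Suc_1
    by (simp add: power2_eq_square flip: exp_add)
  ultimately show ?thesis by (simp add: algebra_simps)
qed

text \<open>The terms of energy_density_dt with three \<theta>-derivatives are total \<theta>-derivatives
  of periodic functions and integrate to zero.\<close>

definition "P_flux_dtheta t \<theta> = DP 0 3 t \<theta> * DP 1 1 t \<theta> + DP 0 2 t \<theta> * DP 1 2 t \<theta>"

definition "Q_flux_dtheta t \<theta> = 2 * DP 0 1 t \<theta> * (exp (DP 0 0 t \<theta>))\<^sup>2 * DQ 0 2 t \<theta> * DQ 1 1 t \<theta>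
   + (exp (DP 0 0 t \<theta>))\<^sup>2 * DQ 0 3 t \<theta> * DQ 1 1 t \<theta> + (exp (DP 0 0 t \<theta>))\<^sup>2 * DQ 0 2 t \<theta> * DQ 1 2 t \<theta>"

lemma integral_P_flux_dtheta: assumes t: "\<tau>0 \<le> t" shows "integral {0..2*pi} (P_flux_dtheta t) = 0"
proof (rule integral_derivative_of_periodic)
  show "((\<lambda>\<phi>. DP 0 2 t \<phi> * DP 1 1 t \<phi>) has_real_derivative P_flux_dtheta t x) (at x)" for x
    unfolding P_flux_dtheta_def
    by (auto intro!: derivative_eq_intros smooth_family_deriv_theta[OF smP t]
        simp: numeral_eq_Suc One_nat_def algebra_simps)
  show "DP 0 2 t (2 * pi) * DP 1 1 t (2 * pi) = DP 0 2 t 0 * DP 1 1 t 0"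
    using smooth_family_periodic[OF smP perP t, of _ _ 0] by simp
qed

lemma integral_Q_flux_dtheta: assumes t: "\<tau>0 \<le> t" shows "integral {0..2*pi} (Q_flux_dtheta t) = 0"
proof (rule integral_derivative_of_periodic)
  show "((\<lambda>\<phi>. (exp (DP 0 0 t \<phi>))\<^sup>2 * DQ 0 2 t \<phi> * DQ 1 1 t \<phi>) has_real_derivative Q_flux_dtheta t x) (at x)" for x
    unfolding Q_flux_dtheta_def
    by (auto intro!: derivative_eq_intros smooth_family_deriv_theta[OF smP t] smooth_family_deriv_theta[OF smQ t]
        simp: numeral_eq_Suc One_nat_def power2_eq_square algebra_simps)
  show "(exp (DP 0 0 t (2 * pi)))\<^sup>2 * DQ 0 2 t (2 * pi) * DQ 1 1 t (2 * pi)
      = (exp (DP 0 0 t 0))\<^sup>2 * DQ 0 2 t 0 * DQ 1 1 t 0"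
    using smooth_family_periodic[OF smP perP t, of _ _ 0] smooth_family_periodic[OF smQ perQ t, of _ _ 0] by simp
qed

definition "energy_rate_const = x_decay_const + 4 * sqrt (x_decay_const / 2) + 1"

lemma energy_rate_const_nonneg: "0 \<le> energy_rate_const"
  unfolding energy_rate_const_def using x_decay_const_nonneg by simp

lemma energy_rate_le:
  assumes t: "0 \<le> t"
  defines "X \<equiv> x_decay_const * exp (- (3 * \<alpha> / 4) * t) / 2"
  shows "2 * X / weight t + 4 * sqrt X + weight t \<le> energy_rate_const * exp (- (\<alpha> / 4) * t)"
proof -
  have "exp (- (3 * \<alpha> / 4) * t) = weight t * exp (- (\<alpha> / 4) * t)"
    unfolding weight_def mult_exp_exp by (simp add: field_simps)
  then have "2 * X / weight t = x_decay_const * exp (- (\<alpha> / 4) * t)"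
    unfolding X_def by (simp add: weight_def)
  moreover have "sqrt X = sqrt (x_decay_const / 2) * exp (- (3 * \<alpha> / 8) * t)"
  proof -
    have "exp (- (3 * \<alpha> / 4) * t) = (exp (- (3 * \<alpha> / 8) * t))\<^sup>2"
      by (simp add: power2_eq_square flip: exp_add)
    then have "X = x_decay_const / 2 * (exp (- (3 * \<alpha> / 8) * t))\<^sup>2" unfolding X_def by simp
    then have "sqrt X = sqrt (x_decay_const / 2) * sqrt ((exp (- (3 * \<alpha> / 8) * t))\<^sup>2)"
      by (simp only: real_sqrt_mult)
    then show ?thesis by simp
  qed
  ultimately have "2 * X / weight t + 4 * sqrt X + weight t
      = x_decay_const * exp (- (\<alpha> / 4) * t) + 4 * (sqrt (x_decay_const / 2) * exp (- (3 * \<alpha> / 8) * t))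
        + weight t"
    by simp
  also have "\<dots> \<le> x_decay_const * exp (- (\<alpha> / 4) * t) + 4 * (sqrt (x_decay_const / 2) * exp (- (\<alpha> / 4) * t))
        + exp (- (\<alpha> / 4) * t)"
    unfolding weight_def using t alpha x_decay_const_nonneg
    by (intro add_mono mult_left_mono) (simp_all add: mult_right_mono)
  also have "\<dots> = energy_rate_const * exp (- (\<alpha> / 4) * t)"
    unfolding energy_rate_const_def by (simp add: algebra_simps)
  finally show ?thesis .
qed

lemma energy_density_dt_le:
  assumes t: "\<tau>0 \<le> t"
  shows "energy_density_dt t \<theta> - (exp (- t))\<^sup>2 * P_flux_dtheta t \<theta> - (exp (- t))\<^sup>2 * Q_flux_dtheta t \<theta>
    \<le> energy_rate_const * exp (- (\<alpha> / 4) * t) * energy_density t \<theta>"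
proof -
  define X where "X = x_decay_const * exp (- (3 * \<alpha> / 4) * t) / 2"
  have decay: "(xp t \<theta>)\<^sup>2 + (xm t \<theta>)\<^sup>2 \<le> 2 * X" using x_decay[OF t] unfolding X_def by simp
  then have xx: "\<bar>xp t \<theta> * xm t \<theta>\<bar> \<le> X"
    using abs_mult_le_sum_squares[of "xp t \<theta>" "xm t \<theta>"] by (simp add: abs_mult)
  have "exp (DP 0 0 t \<theta>) * exp (- t) * DQ 0 1 t \<theta> = (xp t \<theta> - xm t \<theta>) / 2"
    unfolding xp_def xm_def by (simp add: algebra_simps)
  moreover have "((xp t \<theta> - xm t \<theta>) / 2)\<^sup>2 \<le> X"
    using decay sum_squares_bound[of "xp t \<theta>" "- xm t \<theta>"] by (simp add: power2_eq_square field_simps)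
  ultimately have U: "\<bar>exp (DP 0 0 t \<theta>) * exp (- t) * DQ 0 1 t \<theta>\<bar> \<le> sqrt X"
    by (metis real_sqrt_abs real_sqrt_le_mono)
  have Pt: "0 \<le> DP 1 0 t \<theta>" "DP 1 0 t \<theta> \<le> 1" using P_drift(3,4)[OF t, of \<theta>] alpha by auto
  have "energy_density_dt t \<theta> - (exp (- t))\<^sup>2 * P_flux_dtheta t \<theta> - (exp (- t))\<^sup>2 * Q_flux_dtheta t \<theta>
      \<le> (2 * X / weight t + 4 * sqrt X + weight t) * energy_density t \<theta>"
    using energy_derivative_bound[where Ptx="DP 1 1 t \<theta>" and Px="DP 0 1 t \<theta>" and Pxx="DP 0 2 t \<theta>"
        and Qtx="DQ 1 1 t \<theta>" and Qxx="DQ 0 2 t \<theta>", OF Pt _ _ xx U, of "weight t" \<alpha>]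
      energy_derivative_identity[where Ptxx="DP 1 2 t \<theta>" and Qtxx="DQ 1 2 t \<theta>" and h="weight t" and al=\<alpha>,
        OF P_equation_dtheta[OF t, of \<theta>] Q_equation_dtheta[OF t, of \<theta>]] alpha
    unfolding energy_density_dt_def P_flux_dtheta_def Q_flux_dtheta_def energy_density_def xp_def xm_def
    by (simp add: weight_def)
  also have "\<dots> \<le> energy_rate_const * exp (- (\<alpha> / 4) * t) * energy_density t \<theta>"
    using energy_rate_le[of t] t t0 energy_density_nonneg unfolding X_def by (intro mult_right_mono) auto
  finally show ?thesis .
qed

lemma energy_integral_deriv_le:
  assumes t: "\<tau>0 \<le> t"
  shows "integral {0..2*pi} (energy_density_dt t)
    \<le> energy_rate_const * exp (- (\<alpha> / 4) * t) * (1 + integral {0..2*pi} (energy_density t))"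
proof -
  let ?e = "(exp (- t))\<^sup>2" and ?K = "energy_rate_const * exp (- (\<alpha> / 4) * t)"
  have "energy_density_dt t integrable_on {0..2*pi}" "P_flux_dtheta t integrable_on {0..2*pi}"
    "Q_flux_dtheta t integrable_on {0..2*pi}"
    unfolding energy_density_dt_def P_flux_dtheta_def Q_flux_dtheta_def weight_def
    by (intro integrable_continuous_interval continuous_intros DP_DQ_continuous_theta t)+
  then have "integral {0..2*pi} (energy_density_dt t)
      = integral {0..2*pi} (\<lambda>\<theta>. energy_density_dt t \<theta> - ?e * P_flux_dtheta t \<theta> - ?e * Q_flux_dtheta t \<theta>)"
    using integral_P_flux_dtheta[OF t] integral_Q_flux_dtheta[OF t]
    by (simp add: integral_diff integrable_diff integrable_on_mult_right)
  also have "\<dots> \<le> integral {0..2*pi} (\<lambda>\<theta>. ?K * energy_density t \<theta>)"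
    using \<open>energy_density_dt t integrable_on {0..2*pi}\<close> \<open>P_flux_dtheta t integrable_on {0..2*pi}\<close>
      \<open>Q_flux_dtheta t integrable_on {0..2*pi}\<close> energy_density_integrable[OF t] energy_density_dt_le[OF t]
    by (intro integral_le integrable_diff integrable_on_mult_right) auto
  also have "\<dots> = ?K * integral {0..2*pi} (energy_density t)" by simp
  also have "\<dots> \<le> ?K * (1 + integral {0..2*pi} (energy_density t))"
    using energy_rate_const_nonneg by (intro mult_left_mono) auto
  finally show ?thesis .
qed

end

theorem lemma3:
  fixes P Q :: "real \<Rightarrow> real \<Rightarrow> real"
    and DP DQ :: "nat \<Rightarrow> nat \<Rightarrow> real \<Rightarrow> real \<Rightarrow> real"
    and \<tau>0 \<gamma> \<alpha> :: real
  assumes smP: "smooth_family \<tau>0 P DP" and smQ: "smooth_family \<tau>0 Q DQ"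
    and perP: "periodic_in_theta \<tau>0 P" and perQ: "periodic_in_theta \<tau>0 Q"
    and eqP: "\<And>t \<theta>. \<tau>0 \<le> t \<Longrightarrow>
       DP 2 0 t \<theta> - exp (- 2 * t) * DP 0 2 t \<theta>
       - exp (2 * P t \<theta>) * ((DQ 1 0 t \<theta>)\<^sup>2 - exp (- 2 * t) * (DQ 0 1 t \<theta>)\<^sup>2) = 0"
    and eqQ: "\<And>t \<theta>. \<tau>0 \<le> t \<Longrightarrow>
       DQ 2 0 t \<theta> - exp (- 2 * t) * DQ 0 2 t \<theta>
       + 2 * (DP 1 0 t \<theta> * DQ 1 0 t \<theta> - exp (- 2 * t) * DP 0 1 t \<theta> * DQ 0 1 t \<theta>) = 0"
    and t0: "\<tau>0 \<ge> 2"
    and gpos: "\<gamma> > 0"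
    and Pbd: "\<And>\<theta>. 1 \<le> P \<tau>0 \<theta> \<and> P \<tau>0 \<theta> \<le> \<tau>0 - 1"
    and Pgam: "\<And>\<theta>. \<gamma> \<le> P \<tau>0 \<theta> / \<tau>0 \<and> P \<tau>0 \<theta> / \<tau>0 \<le> 1 - \<gamma>"
    and alpha: "0 < \<alpha>" "\<alpha> < \<gamma>"
    and Fsmall: "Ffun DP DQ \<tau>0 \<le> (\<gamma> - \<alpha>)\<^sup>2"
  shows "\<exists>C. \<forall>t\<ge>\<tau>0. \<bar>Hk \<alpha> DP DQ 1 t\<bar> \<le> C"
proof -
  interpret gowdy_solution P Q DP DQ \<tau>0 \<gamma> \<alpha>
    using smP smQ perP perQ eqP eqQ t0 Pbd Pgam alpha Fsmall by unfold_locales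
  define H where "H t = 1 + integral {0..2*pi} (energy_density t)" for t
  have H_nonneg: "0 \<le> H t" if "\<tau>0 \<le> t" for t
    unfolding H_def using integral_nonneg[OF energy_density_integrable[OF that] energy_density_nonneg] by simp
  have "H t \<le> H \<tau>0 * exp (energy_rate_const / (\<alpha> / 4) * exp (- (\<alpha> / 4) * \<tau>0))" if "\<tau>0 \<le> t" for t
  proof (rule gronwall_exp_decaying_rate[OF _ _ H_nonneg _ energy_rate_const_nonneg that])
    show "(H has_real_derivative integral {0..2*pi} (energy_density_dt s)) (at s within {\<tau>0..})"
      if "\<tau>0 \<le> s" for s
      unfolding H_def using energy_integral_deriv[OF that] by (auto intro!: derivative_eq_intros)
    show "integral {0..2*pi} (energy_density_dt s) \<le> energy_rate_const * exp (- (\<alpha> / 4) * s) * H s"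
      if "\<tau>0 \<le> s" for s
      unfolding H_def by (rule energy_integral_deriv_le[OF that])
  qed (use alpha in auto)
  then show ?thesis
    using Hk1_eq H_nonneg unfolding H_def by (metis abs_of_nonneg)
qed

end
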